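(* Let $K$ be a field, $v:K^*\to\mathbb Z$ a discrete non-archimedean valuation and $T_v$ the Bruhat–Tits tree of $(K,v)$, with its natural action of $GL(2,K)$. Let $\Gamma$ be a finitely generated group, $\chi\in E^1(\Gamma,K)$, and let $\theta:\Gamma\to K$ be a 1-cocycle for $\chi$ whose class in $H^1(\Gamma,\chi)$ is nonzero. Define $\rho:\Gamma\to GL(2,K)$ by $\rho(g)=\begin{pmatrix}\chi(g)&\theta(g)\\0&1\end{pmatrix}$. If $v\circ\chi\in \mathrm{Hom}(\Gamma,\mathbb Z)$ is nonzero, then the action of $\Gamma$ on $T_v$ via $\rho$ is exceptional.
   Context: $E^1(\Gamma,K)$ is the set of characters $\chi:\Gamma\to K^*$ with $H^1(\Gamma,\chi)\ne 0$, where a 1-cocycle is $\theta:\Gamma\to K$ with $\theta(gh)=\theta(g)+\chi(g)\theta(h)$ and coboundaries are $g\mapsto\mu(\chi(g)-1)$. The Bruhat–Tits tree $T_v$ has as vertices homothety classes of free rank-2 $O_v$-submodules (lattices) of $K^2$ spanning $K^2$, where $O_v=\{v\ge0\}$, two vertices being adjacent when representatives $\Lambda\supset\Lambda'$ satisfy $\Lambda/\Lambda'\cong O_v/\mathfrak m_v$; its boundary is $P^1(\hat K_v)$. For a simplicial tree $T$, rays are isometric maps $r:[a,\infty)\to T$, two rays are equivalent if they eventually coincide up to reparametrization by translation, and $\partial T$ is the set of classes. The Busemann function of $r$ is $b_r(x)=\lim_{t\to\infty}(d(x,r(t))-t)$. If $\Gamma$ acts on $T$ fixing $\alpha\in\partial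 T$ represented by $r$, the Busemann cocycle is the homomorphism $\omega_\alpha(g)=b_r\circ g-b_r\in\mathbb Z$. The action is exceptional if $\Gamma$ fixes exactly one point of $\partial T$ and the associated Busemann cocycle is nontrivial. *)

theory Defs
  imports Complex_Main "HOL-Algebra.Generated_Groups"
begin

text \<open>A (normalized) discrete non-archimedean valuation v : K* -> Z; values at 0 are irrelevant.\<close>
definition discrete_valuation :: "('k::field \<Rightarrow> int) \<Rightarrow> bool" where
  "discrete_valuation v \<longleftrightarrow>
     (\<forall>x y. x \<noteq> 0 \<and> y \<noteq> 0 \<longrightarrow> v (x * y) = v x + v y) \<and>
     (\<forall>x y. x \<noteq> 0 \<and> y \<noteq> 0 \<and> x + y \<noteq> 0 \<longrightarrow> v (x + y) \<ge> min (v x) (v y)) \<and>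
     v ` (UNIV - {0}) = UNIV"

definition val_ring :: "('k::field \<Rightarrow> int) \<Rightarrow> 'k set" where
  "val_ring v = {x. x = 0 \<or> v x \<ge> 0}"

definition max_ideal :: "('k::field \<Rightarrow> int) \<Rightarrow> 'k set" where
  "max_ideal v = {x. x = 0 \<or> v x > 0}"

definition padd :: "'k::field \<times> 'k \<Rightarrow> 'k \<times> 'k \<Rightarrow> 'k \<times> 'k" where
  "padd p q = (fst p + fst q, snd p + snd q)"

definition psmul :: "'k::field \<Rightarrow> 'k \<times> 'k \<Rightarrow> 'k \<times> 'k" where
  "psmul c p = (c * fst p, c * snd p)"

text \<open>A 2x2 matrix (a,b,c,d) = [[a,b],[c,d]] acting on column vectors.\<close>
type_synonym 'k mat2 = "'k \<times> 'k \<times> 'k \<times> 'k"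

definition mat_apply :: "'k::field mat2 \<Rightarrow> 'k \<times> 'k \<Rightarrow> 'k \<times> 'k" where
  "mat_apply M p = (case M of (a, b, c, d) \<Rightarrow>
      (a * fst p + b * snd p, c * fst p + d * snd p))"

text \<open>Free rank-2 O_v-submodule of K^2 spanning K^2: the O_v-span of a K-basis.\<close>
definition bt_lattice :: "('k::field \<Rightarrow> int) \<Rightarrow> ('k \<times> 'k) set \<Rightarrow> bool" where
  "bt_lattice v L \<longleftrightarrow> (\<exists>e1 e2. fst e1 * snd e2 - snd e1 * fst e2 \<noteq> 0 \<and>
      L = {padd (psmul a e1) (psmul b e2) | a b. a \<in> val_ring v \<and> b \<in> val_ring v})"

definition homothety_class :: "('k::field \<times> 'k) set \<Rightarrow> ('k \<times> 'k) set set" where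
  "homothety_class L = {psmul c ` L | c. c \<noteq> 0}"

definition bt_vertices :: "('k::field \<Rightarrow> int) \<Rightarrow> ('k \<times> 'k) set set set" where
  "bt_vertices v = {homothety_class L | L. bt_lattice v L}"

text \<open>\<open>L/L' \<cong> O_v/m_v\<close> as O_v-modules (for L' \<subseteq> L): there is a surjective O_v-linear map
  L -> O_v/m_v with kernel L'; the map is given by a lift f : L -> O_v.\<close>
definition quot_residue :: "('k::field \<Rightarrow> int) \<Rightarrow> ('k \<times> 'k) set \<Rightarrow> ('k \<times> 'k) set \<Rightarrow> bool" where
  "quot_residue v L L' \<longleftrightarrow> (\<exists>f. (\<forall>x\<in>L. f x \<in> val_ring v) \<and>
      (\<forall>x\<in>L. \<forall>y\<in>L. f (padd x y) - f x - f y \<in> max_ideal v) \<and>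
      (\<forall>a\<in>val_ring v. \<forall>x\<in>L. f (psmul a x) - a * f x \<in> max_ideal v) \<and>
      (\<forall>c\<in>val_ring v. \<exists>x\<in>L. f x - c \<in> max_ideal v) \<and>
      L' = {x\<in>L. f x \<in> max_ideal v})"

definition bt_adj :: "('k::field \<Rightarrow> int) \<Rightarrow> ('k \<times> 'k) set set \<Rightarrow> ('k \<times> 'k) set set \<Rightarrow> bool" where
  "bt_adj v X Y \<longleftrightarrow> X \<in> bt_vertices v \<and> Y \<in> bt_vertices v \<and>
     ((\<exists>L\<in>X. \<exists>L'\<in>Y. L' \<subseteq> L \<and> quot_residue v L L') \<or>
      (\<exists>L\<in>Y. \<exists>L'\<in>X. L' \<subseteq> L \<and> quot_residue v L L'))"

definition gl_vertex_act :: "'k::field mat2 \<Rightarrow> ('k \<times> 'k) set set \<Rightarrow> ('k \<times> 'k) set set" where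
  "gl_vertex_act M X = (\<lambda>L. mat_apply M ` L) ` X"

definition is_walk :: "('a \<Rightarrow> 'a \<Rightarrow> bool) \<Rightarrow> 'a list \<Rightarrow> bool" where
  "is_walk adj xs \<longleftrightarrow> xs \<noteq> [] \<and> (\<forall>i. Suc i < length xs \<longrightarrow> adj (xs ! i) (xs ! Suc i))"

definition gdist :: "('a \<Rightarrow> 'a \<Rightarrow> bool) \<Rightarrow> 'a \<Rightarrow> 'a \<Rightarrow> nat" where
  "gdist adj x y = (LEAST n. \<exists>xs. is_walk adj xs \<and> hd xs = x \<and> last xs = y \<and> length xs = Suc n)"

definition is_ray :: "'a set \<Rightarrow> ('a \<Rightarrow> 'a \<Rightarrow> bool) \<Rightarrow> (nat \<Rightarrow> 'a) \<Rightarrow> bool" where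
  "is_ray V adj r \<longleftrightarrow> (\<forall>n. r n \<in> V) \<and>
     (\<forall>m n. int (gdist adj (r m) (r n)) = \<bar>int m - int n\<bar>)"

definition ray_equiv :: "(nat \<Rightarrow> 'a) \<Rightarrow> (nat \<Rightarrow> 'a) \<Rightarrow> bool" where
  "ray_equiv r r' \<longleftrightarrow> (\<exists>a b. \<forall>n. r (n + a) = r' (n + b))"

definition ray_class :: "'a set \<Rightarrow> ('a \<Rightarrow> 'a \<Rightarrow> bool) \<Rightarrow> (nat \<Rightarrow> 'a) \<Rightarrow> (nat \<Rightarrow> 'a) set" where
  "ray_class V adj r = {r'. is_ray V adj r' \<and> ray_equiv r r'}"

definition tree_boundary :: "'a set \<Rightarrow> ('a \<Rightarrow> 'a \<Rightarrow> bool) \<Rightarrow> (nat \<Rightarrow> 'a) set set" where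
  "tree_boundary V adj = {ray_class V adj r | r. is_ray V adj r}"

definition boundary_act :: "('a \<Rightarrow> 'a) \<Rightarrow> (nat \<Rightarrow> 'a) set \<Rightarrow> (nat \<Rightarrow> 'a) set" where
  "boundary_act f \<alpha> = {f \<circ> r | r. r \<in> \<alpha>}"

definition busemann :: "('a \<Rightarrow> 'a \<Rightarrow> bool) \<Rightarrow> (nat \<Rightarrow> 'a) \<Rightarrow> 'a \<Rightarrow> real" where
  "busemann adj r x = lim (\<lambda>n. real (gdist adj x (r n)) - real n)"

definition busemann_cocycle ::
  "'a set \<Rightarrow> ('a \<Rightarrow> 'a \<Rightarrow> bool) \<Rightarrow> ('g \<Rightarrow> 'a \<Rightarrow> 'a) \<Rightarrow> (nat \<Rightarrow> 'a) \<Rightarrow> 'g \<Rightarrow> 'a \<Rightarrow> real" where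
  "busemann_cocycle V adj act r g = (\<lambda>x\<in>V. busemann adj r (act g x) - busemann adj r x)"

definition exceptional_action ::
  "('g, 'b) monoid_scheme \<Rightarrow> 'a set \<Rightarrow> ('a \<Rightarrow> 'a \<Rightarrow> bool) \<Rightarrow> ('g \<Rightarrow> 'a \<Rightarrow> 'a) \<Rightarrow> bool" where
  "exceptional_action G V adj act \<longleftrightarrow>
     (\<exists>!\<alpha>. \<alpha> \<in> tree_boundary V adj \<and> (\<forall>g\<in>carrier G. boundary_act (act g) \<alpha> = \<alpha>)) \<and>
     (\<forall>\<alpha> r. \<alpha> \<in> tree_boundary V adj \<and> (\<forall>g\<in>carrier G. boundary_act (act g) \<alpha> = \<alpha>) \<and> r \<in> \<alpha>
        \<longrightarrow> (\<exists>g\<in>carrier G. busemann_cocycle V adj act r g \<noteq> (\<lambda>x\<in>V. 0)))"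

definition character :: "('g, 'b) monoid_scheme \<Rightarrow> ('g \<Rightarrow> 'k::field) \<Rightarrow> bool" where
  "character G \<chi> \<longleftrightarrow> (\<forall>g\<in>carrier G. \<chi> g \<noteq> 0) \<and>
     (\<forall>g\<in>carrier G. \<forall>h\<in>carrier G. \<chi> (g \<otimes>\<^bsub>G\<^esub> h) = \<chi> g * \<chi> h)"

definition cocycle1 :: "('g, 'b) monoid_scheme \<Rightarrow> ('g \<Rightarrow> 'k::field) \<Rightarrow> ('g \<Rightarrow> 'k) \<Rightarrow> bool" where
  "cocycle1 G \<chi> \<theta> \<longleftrightarrow>
     (\<forall>g\<in>carrier G. \<forall>h\<in>carrier G. \<theta> (g \<otimes>\<^bsub>G\<^esub> h) = \<theta> g + \<chi> g * \<theta> h)"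

definition coboundary1 :: "('g, 'b) monoid_scheme \<Rightarrow> ('g \<Rightarrow> 'k::field) \<Rightarrow> ('g \<Rightarrow> 'k) \<Rightarrow> bool" where
  "coboundary1 G \<chi> \<theta> \<longleftrightarrow> (\<exists>\<mu>. \<forall>g\<in>carrier G. \<theta> g = \<mu> * (\<chi> g - 1))"

definition E1 :: "('g, 'b) monoid_scheme \<Rightarrow> ('g \<Rightarrow> 'k::field) set" where
  "E1 G = {\<chi>. character G \<chi> \<and> (\<exists>\<theta>. cocycle1 G \<chi> \<theta> \<and> \<not> coboundary1 G \<chi> \<theta>)}"

definition finitely_generated_group :: "('g, 'b) monoid_scheme \<Rightarrow> bool" where
  "finitely_generated_group G \<longleftrightarrow> group G \<and>
     (\<exists>S. finite S \<and> S \<subseteq> carrier G \<and> generate G S = carrier G)"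

definition affine_rep :: "('g \<Rightarrow> 'k::field) \<Rightarrow> ('g \<Rightarrow> 'k) \<Rightarrow> 'g \<Rightarrow> 'k mat2" where
  "affine_rep \<chi> \<theta> g = (\<chi> g, \<theta> g, 0, 1)"

end

theory Submission
  imports Defs
begin

(* The vertices of T_v are the homothety classes of the lattices
     {(x, y). y \<in> O_v, x - y z \<in> m_v^n},
   which correspond to the closed balls {w. v (w - z) \<ge> n} of K; two vertices are adjacent iff
   one ball is a maximal proper subball of the other. The matrix rho(g) acts on balls through the
   affine map w \<mapsto> chi(g) w + theta(g). Hence every rho(g) fixes the end \<infinity>, represented by the balls
   around 0 of growing radius, and shifts the radius exponent by v(chi g), which is the Busemann
   cocycle of \<infinity> and is nonzero.
   A ray representing any other fixed end eventually consists of shrinking balls B(Z m, c + m).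
   For g0 with v(chi g0) > 0 the centres Z m converge to the fixed point of the contraction
   w \<mapsto> chi(g0) w + theta(g0), and invariance of the end under every rho(g) forces this point to be
   fixed by all of them. A common fixed point zeta makes theta the coboundary of -zeta. *)

section \<open>Walks, distances and rays in a graph\<close>

lemma is_walk_Cons:
  assumes "adj x (hd ys)" and "is_walk adj ys"
  shows "is_walk adj (x # ys)"
  unfolding is_walk_def
proof (intro conjI allI impI)
  fix i assume "Suc i < length (x # ys)"
  then show "adj ((x # ys) ! i) ((x # ys) ! Suc i)"
    using assms by (cases i) (auto simp: is_walk_def hd_conv_nth)
qed simp

lemma rtranclp_imp_walk:
  assumes "adj\<^sup>*\<^sup>* x y"
  obtains xs where "is_walk adj xs" "hd xs = x" "last xs = y"
  using assms
proof (induction arbitrary: thesis rule: converse_rtranclp_induct)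
  case base
  show ?case by (rule base[of "[y]"]) (simp_all add: is_walk_def)
next
  case (step x z)
  obtain ys where ys: "is_walk adj ys" "hd ys = z" "last ys = y" by (rule step.IH)
  then have "ys \<noteq> []" by (simp add: is_walk_def)
  then show ?case using step.hyps(1) ys by (intro step.prems[of "x # ys"] is_walk_Cons) auto
qed

lemma gdist_le_walk:
  assumes "is_walk adj xs" "hd xs = x" "last xs = y"
  shows "gdist adj x y \<le> length xs - 1"
proof -
  have "length xs = Suc (length xs - 1)" using assms(1) by (simp add: is_walk_def)
  then show ?thesis unfolding gdist_def using assms by (intro Least_le) blast
qed

lemma gdist_shortest_walk:
  assumes "adj\<^sup>*\<^sup>* x y"
  obtains xs where "is_walk adj xs" "hd xs = x" "last xs = y" "length xs = Suc (gdist adj x y)"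
proof -
  obtain xs where xs: "is_walk adj xs" "hd xs = x" "last xs = y"
    using rtranclp_imp_walk[OF assms] .
  then have "length xs = Suc (length xs - 1)" by (simp add: is_walk_def)
  with xs have "\<exists>n xs. is_walk adj xs \<and> hd xs = x \<and> last xs = y \<and> length xs = Suc n" by blast
  then have "\<exists>xs. is_walk adj xs \<and> hd xs = x \<and> last xs = y \<and> length xs = Suc (gdist adj x y)"
    unfolding gdist_def by (rule LeastI_ex)
  then show ?thesis using that by blast
qed

lemma gdist_self [simp]: "gdist adj x x = 0"
  using gdist_le_walk[of adj "[x]"] by (simp add: is_walk_def)

lemma gdist_eq_1_imp_adj:
  assumes "adj\<^sup>*\<^sup>* x y" "gdist adj x y = 1"
  shows "adj x y"
proof -
  obtain xs where xs: "is_walk adj xs" "hd xs = x" "last xs = y" "length xs = 2"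
    using gdist_shortest_walk[OF assms(1)] assms(2) by (metis numeral_2_eq_2 One_nat_def)
  then obtain a b where "xs = [a, b]"
    by (metis One_nat_def Suc_1 length_0_conv length_Suc_conv)
  then show ?thesis using xs unfolding is_walk_def by auto
qed

lemma gdist_hom_le:
  assumes hom: "\<And>a b. adj a b \<Longrightarrow> adj (f a) (f b)" and "adj\<^sup>*\<^sup>* x y"
  shows "gdist adj (f x) (f y) \<le> gdist adj x y"
proof -
  obtain xs where xs: "is_walk adj xs" "hd xs = x" "last xs = y" "length xs = Suc (gdist adj x y)"
    using gdist_shortest_walk[OF assms(2)] .
  then have "xs \<noteq> []" by (simp add: is_walk_def)
  moreover have "is_walk adj (map f xs)" using xs(1) hom by (auto simp: is_walk_def)
  ultimately show ?thesis
    using gdist_le_walk[of adj "map f xs" "f x" "f y"] xs by (simp add: hd_map last_map)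
qed

lemma walk_height_diff_le:
  assumes "\<And>a b. adj a b \<Longrightarrow> \<bar>h a - h b\<bar> \<le> (1::int)" and "is_walk adj xs"
  shows "\<bar>h (last xs) - h (hd xs)\<bar> \<le> int (length xs) - 1"
  using assms(2)
proof (induction xs)
  case (Cons x ys)
  show ?case
  proof (cases ys)
    case (Cons y zs)
    with Cons.prems have "adj x y" "is_walk adj ys" by (auto simp: is_walk_def)
    with Cons.IH assms(1)[of x y] Cons show ?thesis by fastforce
  qed simp
qed (simp add: is_walk_def)

lemma height_diff_le_gdist:
  assumes "\<And>a b. adj a b \<Longrightarrow> \<bar>h a - h b\<bar> \<le> (1::int)" and "adj\<^sup>*\<^sup>* x y"
  shows "\<bar>h y - h x\<bar> \<le> int (gdist adj x y)"
proof -
  obtain xs where "is_walk adj xs" "hd xs = x" "last xs = y" "length xs = Suc (gdist adj x y)"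
    using gdist_shortest_walk[OF assms(2)] .
  then show ?thesis using walk_height_diff_le[OF assms(1)] by fastforce
qed

lemma path_rtranclp:
  assumes "\<And>i. adj (p i) (p (Suc i))"
  shows "adj\<^sup>*\<^sup>* (p m) (p (m + k))"
  by (induction k) (auto intro: rtranclp.rtrancl_into_rtrancl assms)

lemma gdist_path_le:
  assumes "\<And>i. adj (p i) (p (Suc i))"
  shows "gdist adj (p m) (p (m + k)) \<le> k"
proof -
  let ?xs = "map (\<lambda>i. p (m + i)) [0..<Suc k]"
  have "is_walk adj ?xs" using assms by (auto simp: is_walk_def nth_append simp del: upt_Suc)
  moreover have "hd ?xs = p m" "last ?xs = p (m + k)"
    by (simp_all add: hd_map last_map del: upt_Suc)
  ultimately show ?thesis using gdist_le_walk[of adj ?xs] by simp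
qed

lemma is_walk_rev:
  assumes "symp adj" "is_walk adj xs"
  shows "is_walk adj (rev xs)"
  unfolding is_walk_def
proof (intro conjI allI impI)
  show "rev xs \<noteq> []" using assms(2) by (simp add: is_walk_def)
  fix i assume i: "Suc i < length (rev xs)"
  let ?j = "length xs - Suc (Suc i)"
  have "adj (xs ! ?j) (xs ! Suc ?j)" using assms(2) i unfolding is_walk_def by auto
  moreover have "rev xs ! i = xs ! Suc ?j" "rev xs ! Suc i = xs ! ?j"
    using i by (simp_all add: rev_nth Suc_diff_Suc)
  ultimately show "adj (rev xs ! i) (rev xs ! Suc i)" using assms(1) by (simp add: sympD)
qed

lemma gdist_commute:
  assumes "symp adj"
  shows "gdist adj y x = gdist adj x y"
proof -
  have rev: "is_walk adj (rev xs) \<and> hd (rev xs) = x \<and> last (rev xs) = y \<and> length (rev xs) = Suc n"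
    if "is_walk adj xs \<and> hd xs = y \<and> last xs = x \<and> length xs = Suc n" for xs x y n
    using that is_walk_rev[OF assms] by (auto simp: is_walk_def hd_rev last_rev)
  have "(\<exists>xs. is_walk adj xs \<and> hd xs = y \<and> last xs = x \<and> length xs = Suc n) \<longleftrightarrow>
        (\<exists>xs. is_walk adj xs \<and> hd xs = x \<and> last xs = y \<and> length xs = Suc n)" for n
    using rev[of _ x y n] rev[of _ y x n] by blast
  then show ?thesis unfolding gdist_def by simp
qed

lemma is_ray_adj:
  assumes "is_ray V adj s" and connected: "\<And>x y. x \<in> V \<Longrightarrow> y \<in> V \<Longrightarrow> adj\<^sup>*\<^sup>* x y"
  shows "adj (s n) (s (Suc n))"
proof -
  have "adj\<^sup>*\<^sup>* (s n) (s (Suc n))" using assms unfolding is_ray_def by blast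
  moreover have "int (gdist adj (s n) (s (Suc n))) = 1" using assms(1) unfolding is_ray_def by simp
  ultimately show ?thesis using gdist_eq_1_imp_adj[of adj] by simp
qed

lemma is_ray_no_backtrack:
  assumes "is_ray V adj s"
  shows "s (Suc (Suc n)) \<noteq> s n"
proof
  assume "s (Suc (Suc n)) = s n"
  moreover have "int (gdist adj (s n) (s (Suc (Suc n)))) = 2"
    using assms unfolding is_ray_def by auto
  ultimately show False by simp
qed

lemma ray_equiv_refl: "ray_equiv r r"
  unfolding ray_equiv_def by auto

lemma ray_equiv_sym: "ray_equiv r r' \<Longrightarrow> ray_equiv r' r"
  unfolding ray_equiv_def by metis

lemma ray_equiv_trans:
  assumes "ray_equiv r r'" "ray_equiv r' r''"
  shows "ray_equiv r r''"
proof -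
  obtain a b c d where 1: "\<And>n. r (n + a) = r' (n + b)" and 2: "\<And>n. r' (n + c) = r'' (n + d)"
    using assms unfolding ray_equiv_def by blast
  have "r (n + (a + c)) = r'' (n + (b + d))" for n
    using 1[of "n + c"] 2[of "n + b"] by (simp add: ac_simps)
  then show ?thesis unfolding ray_equiv_def by blast
qed

lemma ray_equiv_comp: "ray_equiv r r' \<Longrightarrow> ray_equiv (f \<circ> r) (f \<circ> r')"
  unfolding ray_equiv_def comp_def by metis

lemma ray_class_eq: "ray_equiv r r' \<Longrightarrow> ray_class V adj r = ray_class V adj r'"
  unfolding ray_class_def using ray_equiv_trans ray_equiv_sym by blast

lemma boundary_act_ray_class:
  assumes f: "\<And>s. is_ray V adj s \<Longrightarrow> is_ray V adj (f \<circ> s)"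
    and g: "\<And>s. is_ray V adj s \<Longrightarrow> is_ray V adj (g \<circ> s)"
    and fg: "\<And>x. x \<in> V \<Longrightarrow> f (g x) = x"
    and "ray_equiv r (f \<circ> r)" "ray_equiv r (g \<circ> r)"
  shows "boundary_act f (ray_class V adj r) = ray_class V adj r"
proof (intro equalityI subsetI)
  fix s assume "s \<in> boundary_act f (ray_class V adj r)"
  then obtain s' where "is_ray V adj s'" "ray_equiv r s'" "s = f \<circ> s'"
    by (auto simp: boundary_act_def ray_class_def)
  then show "s \<in> ray_class V adj r"
    using f assms(4) ray_equiv_comp ray_equiv_trans unfolding ray_class_def by blast
next
  fix s assume s: "s \<in> ray_class V adj r"
  then have "is_ray V adj (g \<circ> s)" "ray_equiv r (g \<circ> s)"
    using g assms(5) ray_equiv_comp ray_equiv_trans unfolding ray_class_def by blast+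
  moreover have "s = f \<circ> (g \<circ> s)" using s fg by (auto simp: ray_class_def is_ray_def)
  ultimately show "s \<in> boundary_act f (ray_class V adj r)"
    unfolding boundary_act_def ray_class_def by blast
qed

lemma busemann_eventually_shifted:
  assumes "\<And>i. r (i + b) = p i" and "\<And>i. i \<ge> N \<Longrightarrow> real (gdist adj x (p i)) = real i + c"
  shows "busemann adj r x = c - real b"
proof -
  have "real (gdist adj x (r n)) - real n = c - real b" if "n \<ge> N + b" for n
    using assms(1)[of "n - b"] assms(2)[of "n - b"] that by simp
  then have "(\<lambda>n. real (gdist adj x (r n)) - real n) \<longlonglongrightarrow> c - real b"
    by (intro tendsto_eventually) (auto simp: eventually_sequentially)
  then show ?thesis unfolding busemann_def by (rule limI)
qed

lemma up_down_sequence_cases: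
  fixes t :: "nat \<Rightarrow> int"
  assumes step: "\<And>n. t (Suc n) = t n + 1 \<or> t n = t (Suc n) + 1"
    and up: "\<And>n. t (Suc n) = t n + 1 \<Longrightarrow> t (Suc (Suc n)) = t (Suc n) + 1"
  shows "(\<forall>n. t n = t 0 - int n) \<or> (\<exists>N. \<forall>m. t (N + m) = t N + int m)"
proof (cases "\<exists>N. t (Suc N) = t N + 1")
  case True
  then obtain N where N: "t (Suc N) = t N + 1" by blast
  have "t (Suc (N + m)) = t (N + m) + 1" for m by (induction m) (use N up in auto)
  then have "t (N + m) = t N + int m" for m by (induction m) auto
  then show ?thesis by blast
next
  case False
  then have "t (Suc n) = t n - 1" for n using step[of n] by auto
  then have "t n = t 0 - int n" for n by (induction n) auto
  then show ?thesis by blast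
qed

lemma psmul_inverse_psmul [simp]: "c \<noteq> 0 \<Longrightarrow> psmul (inverse c) (psmul c p) = p"
  by (simp add: psmul_def field_simps)

lemma psmul_psmul_inverse [simp]: "c \<noteq> 0 \<Longrightarrow> psmul c (psmul (inverse c) p) = p"
  by (simp add: psmul_def field_simps)

lemma mem_psmul_image_iff: "c \<noteq> 0 \<Longrightarrow> p \<in> psmul c ` S \<longleftrightarrow> psmul (inverse c) p \<in> S"
  by (metis image_iff psmul_inverse_psmul psmul_psmul_inverse)

lemma psmul_image_psmul_image [simp]: "psmul c ` psmul d ` S = psmul (c * d) ` S"
  by (simp add: image_image psmul_def mult.assoc)

lemma psmul_one_image [simp]: "psmul 1 ` S = S"
  by (simp add: psmul_def)

lemma homothety_class_psmul:
  assumes "c \<noteq> 0"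
  shows "homothety_class (psmul c ` L) = homothety_class L"
proof (intro equalityI subsetI)
  fix M assume "M \<in> homothety_class (psmul c ` L)"
  then obtain d where "d \<noteq> 0" "M = psmul d ` psmul c ` L" by (auto simp: homothety_class_def)
  moreover from this have "M = psmul (d * c) ` L" "d * c \<noteq> 0" using assms by simp_all
  ultimately show "M \<in> homothety_class L" unfolding homothety_class_def by blast
next
  fix M assume "M \<in> homothety_class L"
  then obtain d where "d \<noteq> 0" "M = psmul d ` L" by (auto simp: homothety_class_def)
  moreover from this have "M = psmul (d / c) ` psmul c ` L" "d / c \<noteq> 0" using assms by simp_all
  ultimately show "M \<in> homothety_class (psmul c ` L)" unfolding homothety_class_def by blast
qed

lemma image_homothety_class:
  assumes "\<And>c x. f (psmul c x) = psmul c (f x)"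
  shows "(\<lambda>L. f ` L) ` homothety_class L = homothety_class (f ` L)"
proof -
  have "f ` psmul c ` L = psmul c ` f ` L" for c by (simp add: image_image assms)
  then show ?thesis unfolding homothety_class_def by blast
qed

section \<open>Discretely valued fields\<close>

locale valued_field =
  fixes v :: "'k::field \<Rightarrow> int"
  assumes discrete_valuation: "discrete_valuation v"
begin

lemma v_mult: "x \<noteq> 0 \<Longrightarrow> y \<noteq> 0 \<Longrightarrow> v (x * y) = v x + v y"
  using discrete_valuation unfolding discrete_valuation_def by blast

lemma v_add_ge: "x \<noteq> 0 \<Longrightarrow> y \<noteq> 0 \<Longrightarrow> x + y \<noteq> 0 \<Longrightarrow> min (v x) (v y) \<le> v (x + y)"
  using discrete_valuation unfolding discrete_valuation_def
  by (elim conjE) (erule allE, erule allE, erule mp, simp)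

lemma v_surj:
  obtains x where "x \<noteq> 0" "v x = n"
proof -
  have "n \<in> v ` (UNIV - {0})" using discrete_valuation unfolding discrete_valuation_def by auto
  then show ?thesis using that by blast
qed

lemma v_one [simp]: "v 1 = 0"
  using v_mult[of 1 1] by simp

lemma v_inverse: "x \<noteq> 0 \<Longrightarrow> v (inverse x) = - v x"
  using v_mult[of x "inverse x"] by simp

lemma v_divide: "x \<noteq> 0 \<Longrightarrow> y \<noteq> 0 \<Longrightarrow> v (x / y) = v x - v y"
  by (simp add: divide_inverse v_mult v_inverse)

lemma v_minus [simp]: "v (- x) = v x"
proof -
  have "v (-1) = 0" using v_mult[of "-1" "-1"] by simp
  then show ?thesis using v_mult[of "-1" x] by (cases "x = 0") simp_all
qed

text \<open>As \<open>v 0\<close> is unspecified, \<open>0\<close> is admitted explicitly; \<open>val_ge n\<close> is the ideal \<open>m\<^sub>v\<^sup>n\<close>.\<close>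
definition val_ge :: "int \<Rightarrow> 'k \<Rightarrow> bool" where
  "val_ge n x \<longleftrightarrow> x = 0 \<or> n \<le> v x"

lemma val_ge_0 [simp]: "val_ge n 0"
  by (simp add: val_ge_def)

lemma val_ge_one [simp]: "val_ge n 1 \<longleftrightarrow> n \<le> 0"
  by (simp add: val_ge_def)

lemma val_ge_self: "val_ge (v x) x"
  by (simp add: val_ge_def)

lemma val_ge_add: "val_ge n (x + y)" if "val_ge n x" "val_ge n y"
proof (cases "x = 0 \<or> y = 0 \<or> x + y = 0")
  case False
  then show ?thesis using v_add_ge[of x y] that by (auto simp: val_ge_def)
qed (use that in \<open>auto simp: val_ge_def\<close>)

lemma val_ge_minus [simp]: "val_ge n (- x) \<longleftrightarrow> val_ge n x"
  by (simp add: val_ge_def)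

lemma val_ge_diff: "val_ge n x \<Longrightarrow> val_ge n y \<Longrightarrow> val_ge n (x - y)"
  using val_ge_add[of n x "- y"] by (simp del: val_ge_minus add: val_ge_def)

lemma val_ge_commute: "val_ge n (x - y) \<longleftrightarrow> val_ge n (y - x)"
  unfolding val_ge_def by (metis minus_diff_eq v_minus eq_iff_diff_eq_0)

lemma val_ge_mono: "val_ge n x \<Longrightarrow> m \<le> n \<Longrightarrow> val_ge m x"
  by (auto simp: val_ge_def)

lemma val_ge_succD: "val_ge (n + 1) x \<Longrightarrow> val_ge n x"
  by (simp add: val_ge_mono)

lemma val_ge_mult: "val_ge n x \<Longrightarrow> val_ge m y \<Longrightarrow> val_ge (n + m) (x * y)"
  by (cases "x = 0"; cases "y = 0") (auto simp: val_ge_def v_mult)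

lemma val_ge_mult_iff: "c \<noteq> 0 \<Longrightarrow> val_ge n (c * x) \<longleftrightarrow> val_ge (n - v c) x"
  by (cases "x = 0") (auto simp: val_ge_def v_mult)

lemma val_ge_divide_iff: "c \<noteq> 0 \<Longrightarrow> val_ge n (x / c) \<longleftrightarrow> val_ge (n + v c) x"
  by (cases "x = 0") (auto simp: val_ge_def v_divide)

lemma val_ge_unit_mult_iff: "v u = 0 \<Longrightarrow> u \<noteq> 0 \<Longrightarrow> val_ge n (u * x) \<longleftrightarrow> val_ge n x"
  by (simp add: val_ge_mult_iff)

lemma val_ge_all_imp_zero:
  assumes "\<And>n. val_ge n x"
  shows "x = 0"
  using assms[of "v x + 1"] by (simp add: val_ge_def)

lemma val_ring_eq: "val_ring v = {x. val_ge 0 x}"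
  by (auto simp: val_ring_def val_ge_def)

lemma max_ideal_eq: "max_ideal v = {x. val_ge 1 x}"
  by (auto simp: max_ideal_def val_ge_def)

lemma v_one_minus:
  assumes "x \<noteq> 0" "0 < v x"
  shows "1 - x \<noteq> 0" "v (1 - x) = 0"
proof -
  show "1 - x \<noteq> 0" using assms by auto
  have "val_ge 1 x" using assms by (simp add: val_ge_def)
  then have "\<not> val_ge 1 (1 - x)" using val_ge_add[of 1 "1 - x" x] by auto
  moreover have "val_ge 0 (1 - x)"
    using val_ge_diff[of 0 1 x] val_ge_mono[OF \<open>val_ge 1 x\<close>, of 0] by simp
  ultimately show "v (1 - x) = 0" by (auto simp: val_ge_def)
qed

end

section \<open>The vertices of the Bruhat--Tits tree\<close>

context valued_field
begin

definition ospan :: "'k \<times> 'k \<Rightarrow> 'k \<times> 'k \<Rightarrow> ('k \<times> 'k) set" where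
  "ospan e1 e2 = {padd (psmul a e1) (psmul b e2) | a b. a \<in> val_ring v \<and> b \<in> val_ring v}"

lemma ospan_eq:
  "ospan (a1, b1) (a2, b2) = {(s * a1 + t * a2, s * b1 + t * b2) | s t. val_ge 0 s \<and> val_ge 0 t}"
  by (simp add: ospan_def padd_def psmul_def val_ring_eq)

lemma ospan_commute: "ospan e1 e2 = ospan e2 e1"
proof -
  have "ospan e1 e2 \<subseteq> ospan e2 e1" for e1 e2
    unfolding ospan_def by (force simp: padd_def add.commute)
  then show ?thesis by blast
qed

lemma ospan_add_multiple:
  assumes "val_ge 0 c"
  shows "ospan (a1, b1) (a2 + c * a1, b2 + c * b1) = ospan (a1, b1) (a2, b2)"
proof (intro Set.set_eqI iffI)
  fix p assume "p \<in> ospan (a1, b1) (a2 + c * a1, b2 + c * b1)"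
  then obtain s t where st: "val_ge 0 s" "val_ge 0 t"
    and p: "p = (s * a1 + t * (a2 + c * a1), s * b1 + t * (b2 + c * b1))"
    by (auto simp: ospan_eq)
  have "val_ge 0 (s + t * c)" using st val_ge_mult[OF st(2) assms] by (simp add: val_ge_add)
  moreover have "p = ((s + t * c) * a1 + t * a2, (s + t * c) * b1 + t * b2)"
    by (simp add: p algebra_simps)
  ultimately show "p \<in> ospan (a1, b1) (a2, b2)" using st(2) unfolding ospan_eq by blast
next
  fix p assume "p \<in> ospan (a1, b1) (a2, b2)"
  then obtain s t where st: "val_ge 0 s" "val_ge 0 t"
    and p: "p = (s * a1 + t * a2, s * b1 + t * b2)"
    by (auto simp: ospan_eq)
  have "val_ge 0 (s - t * c)" using st val_ge_mult[OF st(2) assms] by (simp add: val_ge_diff)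
  moreover have "p = ((s - t * c) * a1 + t * (a2 + c * a1), (s - t * c) * b1 + t * (b2 + c * b1))"
    by (simp add: p algebra_simps)
  ultimately show "p \<in> ospan (a1, b1) (a2 + c * a1, b2 + c * b1)"
    using st(2) unfolding ospan_eq by blast
qed

lemma ospan_scale:
  "ospan (c * a1, c * b1) (c * a2, c * b2) = psmul c ` ospan (a1, b1) (a2, b2)"
proof (intro Set.set_eqI iffI)
  fix p assume "p \<in> ospan (c * a1, c * b1) (c * a2, c * b2)"
  then obtain s t where "val_ge 0 s" "val_ge 0 t"
    and "p = psmul c (s * a1 + t * a2, s * b1 + t * b2)"
    by (auto simp: ospan_eq psmul_def algebra_simps)
  then show "p \<in> psmul c ` ospan (a1, b1) (a2, b2)" unfolding ospan_eq by blast
next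
  fix p assume "p \<in> psmul c ` ospan (a1, b1) (a2, b2)"
  then obtain s t where "val_ge 0 s" "val_ge 0 t"
    and "p = (s * (c * a1) + t * (c * a2), s * (c * b1) + t * (c * b2))"
    by (auto simp: ospan_eq psmul_def algebra_simps)
  then show "p \<in> ospan (c * a1, c * b1) (c * a2, c * b2)" unfolding ospan_eq by blast
qed

definition ball_lattice :: "int \<Rightarrow> 'k \<Rightarrow> ('k \<times> 'k) set" where
  "ball_lattice n z = {p. val_ge 0 (snd p) \<and> val_ge n (fst p - snd p * z)}"

lemma mem_ball_lattice [simp]: "(x, y) \<in> ball_lattice n z \<longleftrightarrow> val_ge 0 y \<and> val_ge n (x - y * z)"
  by (simp add: ball_lattice_def)

lemma ospan_eq_ball_lattice:
  assumes "w \<noteq> 0"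
  shows "ospan (w, 0) (z, 1) = ball_lattice (v w) z"
proof (intro Set.set_eqI iffI)
  fix p assume "p \<in> ospan (w, 0) (z, 1)"
  then obtain s t where "val_ge 0 s" "val_ge 0 t" "p = (s * w + t * z, t)"
    by (auto simp: ospan_eq)
  then show "p \<in> ball_lattice (v w) z" using val_ge_mult[of 0 s "v w" w] by (simp add: val_ge_self)
next
  fix p assume "p \<in> ball_lattice (v w) z"
  moreover obtain x y where p: "p = (x, y)" by (cases p)
  ultimately have "val_ge 0 ((x - y * z) / w)" "val_ge 0 y"
    using assms by (simp_all add: val_ge_divide_iff)
  moreover have "p = ((x - y * z) / w * w + y * z, (x - y * z) / w * 0 + y * 1)"
    using assms by (simp add: p)
  ultimately show "p \<in> ospan (w, 0) (z, 1)" unfolding ospan_eq by blast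
qed

lemma bt_lattice_ball_lattice: "bt_lattice v (ball_lattice n z)"
proof -
  obtain w where "w \<noteq> 0" "v w = n" using v_surj .
  then show ?thesis unfolding bt_lattice_def ospan_def[symmetric]
    by (intro exI[of _ "(w, 0)"] exI[of _ "(z, 1)"]) (simp add: ospan_eq_ball_lattice)
qed

text \<open>Subtracting \<open>b2 / b1\<close> times the first basis vector from the second clears its second
  coordinate; what remains is \<open>b1\<close> times a basis of the shape \<open>(w, 0), (z, 1)\<close>.\<close>
lemma ospan_normal_form:
  assumes det: "a1 * b2 - b1 * a2 \<noteq> 0" and "b1 \<noteq> 0" and "b2 = 0 \<or> v b1 \<le> v b2"
  obtains c n z where "c \<noteq> 0" "ospan (a1, b1) (a2, b2) = psmul c ` ball_lattice n z"
proof -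
  define d where "d = a2 - b2 / b1 * a1"
  have "val_ge 0 (- b2 / b1)" using assms(2,3) by (cases "b2 = 0") (auto simp: val_ge_def v_divide)
  then have "ospan (a1, b1) (a2, b2) = ospan (a1, b1) (d, 0)"
    using ospan_add_multiple[of "- b2 / b1" a1 b1 a2 b2] assms(2) by (simp add: d_def)
  also have "\<dots> = ospan (b1 * (d / b1), b1 * 0) (b1 * (a1 / b1), b1 * 1)"
    using assms(2) by (simp add: ospan_commute)
  also have "\<dots> = psmul b1 ` ball_lattice (v (d / b1)) (a1 / b1)"
  proof -
    have "d * b1 \<noteq> 0" using det assms(2) by (simp add: d_def algebra_simps)
    then have "d / b1 \<noteq> 0" by simp
    from ospan_eq_ball_lattice[OF this] show ?thesis by (simp only: ospan_scale)
  qed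
  finally show ?thesis using that assms(2) by blast
qed

lemma bt_lattice_normal_form:
  assumes "bt_lattice v L"
  obtains c n z where "c \<noteq> 0" "L = psmul c ` ball_lattice n z"
proof -
  obtain a1 b1 a2 b2 where det: "a1 * b2 - b1 * a2 \<noteq> 0" and L: "L = ospan (a1, b1) (a2, b2)"
    using assms unfolding bt_lattice_def ospan_def[symmetric] by force
  show ?thesis
  proof (cases "b1 \<noteq> 0 \<and> (b2 = 0 \<or> v b1 \<le> v b2)")
    case True
    then show ?thesis using ospan_normal_form[OF det] L that by blast
  next
    case False
    then have "b2 \<noteq> 0" "b1 = 0 \<or> v b2 \<le> v b1" using det by auto
    moreover have "a2 * b1 - b2 * a1 \<noteq> 0" using det by (simp add: algebra_simps)
    ultimately show ?thesis using ospan_normal_form[of a2 b1 b2 a1] L that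
      by (metis ospan_commute)
  qed
qed

text \<open>The vertex \<open>ball_vertex n z\<close> stands for the closed ball \<open>{w. v (w - z) \<ge> n}\<close> of \<open>K\<close>.\<close>
definition ball_vertex :: "int \<Rightarrow> 'k \<Rightarrow> ('k \<times> 'k) set set" where
  "ball_vertex n z = homothety_class (ball_lattice n z)"

lemma mem_ball_vertex: "L \<in> ball_vertex n z \<longleftrightarrow> (\<exists>c. c \<noteq> 0 \<and> L = psmul c ` ball_lattice n z)"
  by (auto simp: ball_vertex_def homothety_class_def)

lemma ball_lattice_in_ball_vertex: "ball_lattice n z \<in> ball_vertex n z"
  unfolding mem_ball_vertex by (intro exI[of _ 1]) simp

lemma psmul_ball_lattice_subset:
  assumes "c \<noteq> 0" and sub: "psmul c ` ball_lattice n z \<subseteq> ball_lattice n' z'"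
  shows "val_ge 0 c" "n' \<le> v c + n" "val_ge n' (c * (z - z'))"
proof -
  have "psmul c (z, 1) \<in> ball_lattice n' z'" using sub by auto
  then show "val_ge 0 c" "val_ge n' (c * (z - z'))" by (simp_all add: psmul_def algebra_simps)
  obtain w where w: "w \<noteq> 0" "v w = n" using v_surj .
  then have "psmul c (w, 0) \<in> ball_lattice n' z'" using sub by (auto simp: val_ge_self)
  then show "n' \<le> v c + n" using assms(1) w by (simp add: psmul_def val_ge_def v_mult)
qed

lemma ball_lattice_cong: "val_ge n (z - z') \<Longrightarrow> ball_lattice n z = ball_lattice n z'"
proof (intro Set.set_eqI)
  fix p :: "'k \<times> 'k"
  obtain x y where p: "p = (x, y)" by (cases p)
  assume "val_ge n (z - z')"
  then have "val_ge n (x - y * z) \<longleftrightarrow> val_ge n (x - y * z')" if "val_ge 0 y"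
    using val_ge_mult[OF that, of n "z - z'"] val_ge_add[of n "x - y * z" "y * (z - z')"]
      val_ge_diff[of n "x - y * z'" "y * (z - z')"]
    by (auto simp: algebra_simps)
  then show "p \<in> ball_lattice n z \<longleftrightarrow> p \<in> ball_lattice n z'" by (auto simp: p)
qed

lemma psmul_unit_ball_lattice:
  assumes "u \<noteq> 0" "v u = 0"
  shows "psmul u ` ball_lattice n z = ball_lattice n z"
proof (intro Set.set_eqI)
  fix p :: "'k \<times> 'k"
  obtain x y where p: "p = (x, y)" by (cases p)
  have "v (inverse u) = 0" "inverse u \<noteq> 0" using assms by (simp_all add: v_inverse)
  moreover have "inverse u * x - inverse u * y * z = inverse u * (x - y * z)"
    by (simp add: algebra_simps)
  ultimately have "psmul (inverse u) p \<in> ball_lattice n z \<longleftrightarrow> p \<in> ball_lattice n z"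
    by (simp add: p psmul_def val_ge_unit_mult_iff)
  then show "p \<in> psmul u ` ball_lattice n z \<longleftrightarrow> p \<in> ball_lattice n z"
    using mem_psmul_image_iff[OF assms(1)] by blast
qed

lemma ball_vertex_eq_iff: "ball_vertex n z = ball_vertex n' z' \<longleftrightarrow> n = n' \<and> val_ge n (z - z')"
proof
  assume "ball_vertex n z = ball_vertex n' z'"
  then have "ball_lattice n' z' \<in> ball_vertex n z" using ball_lattice_in_ball_vertex by simp
  then obtain c where c: "c \<noteq> 0" "ball_lattice n' z' = psmul c ` ball_lattice n z"
    unfolding mem_ball_vertex by blast
  then have "psmul (inverse c) ` ball_lattice n' z' = ball_lattice n z" by simp
  with c have "val_ge 0 c" "n' \<le> v c + n" "val_ge n' (c * (z - z'))"
    "val_ge 0 (inverse c)" "n \<le> v (inverse c) + n'"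
    using psmul_ball_lattice_subset[of c n z n' z']
      psmul_ball_lattice_subset[of "inverse c" n' z' n z]
    by auto
  moreover from this have "v c = 0" using c(1) by (auto simp: val_ge_def v_inverse)
  ultimately show "n = n' \<and> val_ge n (z - z')" using c(1) v_inverse[of c]
    by (auto simp: val_ge_unit_mult_iff)
next
  assume "n = n' \<and> val_ge n (z - z')"
  then show "ball_vertex n z = ball_vertex n' z'" unfolding ball_vertex_def
    using ball_lattice_cong by metis
qed

lemma bt_vertices_eq: "bt_vertices v = {ball_vertex n z | n z. True}"
proof (intro equalityI subsetI)
  fix X assume "X \<in> bt_vertices v"
  then obtain L where L: "bt_lattice v L" "X = homothety_class L" by (auto simp: bt_vertices_def)
  obtain c n z where "c \<noteq> 0" "L = psmul c ` ball_lattice n z"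
    using bt_lattice_normal_form[OF L(1)] .
  then have "X = ball_vertex n z" using L(2) by (simp add: ball_vertex_def homothety_class_psmul)
  then show "X \<in> {ball_vertex n z | n z. True}" by blast
next
  fix X assume "X \<in> {ball_vertex n z | n z. True}"
  then show "X \<in> bt_vertices v"
    unfolding bt_vertices_def ball_vertex_def using bt_lattice_ball_lattice by blast
qed

lemma ball_vertex_in_bt_vertices [simp]: "ball_vertex n z \<in> bt_vertices v"
  by (auto simp: bt_vertices_eq)

lemma bt_vertices_cases:
  assumes "X \<in> bt_vertices v"
  obtains n z where "X = ball_vertex n z"
  using assms by (auto simp: bt_vertices_eq)

end

section \<open>Adjacency\<close>

context valued_field
begin

lemma bt_adj_sym: "bt_adj v X Y \<Longrightarrow> bt_adj v Y X"
  unfolding bt_adj_def by blast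

lemma quot_residue_iff:
  "quot_residue v L L' \<longleftrightarrow> (\<exists>f. (\<forall>x\<in>L. val_ge 0 (f x)) \<and>
      (\<forall>x\<in>L. \<forall>y\<in>L. val_ge 1 (f (padd x y) - f x - f y)) \<and>
      (\<forall>a. val_ge 0 a \<longrightarrow> (\<forall>x\<in>L. val_ge 1 (f (psmul a x) - a * f x))) \<and>
      (\<forall>c. val_ge 0 c \<longrightarrow> (\<exists>x\<in>L. val_ge 1 (f x - c))) \<and>
      L' = {x\<in>L. val_ge 1 (f x)})"
  unfolding quot_residue_def val_ring_eq max_ideal_eq by simp

lemma quot_residueE:
  assumes "quot_residue v L L'"
  obtains f where "\<forall>x\<in>L. val_ge 0 (f x)" "\<forall>x\<in>L. \<forall>y\<in>L. val_ge 1 (f (padd x y) - f x - f y)"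
    "\<forall>a. val_ge 0 a \<longrightarrow> (\<forall>x\<in>L. val_ge 1 (f (psmul a x) - a * f x))"
    "\<forall>c. val_ge 0 c \<longrightarrow> (\<exists>x\<in>L. val_ge 1 (f x - c))" "L' = {x\<in>L. val_ge 1 (f x)}"
  using assms unfolding quot_residue_iff by blast

lemma quot_residue_psmul:
  assumes "c \<noteq> 0" and "quot_residue v L L'"
  shows "quot_residue v (psmul c ` L) (psmul c ` L')"
proof -
  obtain f where f: "\<forall>x\<in>L. val_ge 0 (f x)" "\<forall>x\<in>L. \<forall>y\<in>L. val_ge 1 (f (padd x y) - f x - f y)"
    "\<forall>a. val_ge 0 a \<longrightarrow> (\<forall>x\<in>L. val_ge 1 (f (psmul a x) - a * f x))"
    "\<forall>b. val_ge 0 b \<longrightarrow> (\<exists>x\<in>L. val_ge 1 (f x - b))" "L' = {x\<in>L. val_ge 1 (f x)}"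
    using assms(2) by (rule quot_residueE)
  define g where "g y = f (psmul (inverse c) y)" for y
  have g: "g (psmul c x) = f x" for x using assms(1) by (simp add: g_def)
  have "padd (psmul c x) (psmul c y) = psmul c (padd x y)" for x y
    by (simp add: padd_def psmul_def algebra_simps)
  then have g_padd: "g (padd (psmul c x) (psmul c y)) = f (padd x y)" for x y by (simp add: g)
  have "psmul a (psmul c x) = psmul c (psmul a x)" for a x by (simp add: psmul_def algebra_simps)
  then have g_psmul: "g (psmul a (psmul c x)) = f (psmul a x)" for a x by (simp add: g)
  have "\<exists>y\<in>psmul c ` L. val_ge 1 (g y - b)" if b: "val_ge 0 b" for b
  proof -
    obtain x where "x \<in> L" "val_ge 1 (f x - b)" using f(4) b by blast
    then show ?thesis using g by (intro bexI[of _ "psmul c x"]) auto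
  qed
  moreover have "psmul c ` L' = {y \<in> psmul c ` L. val_ge 1 (g y)}" using f(5) g by auto
  ultimately show ?thesis unfolding quot_residue_iff using f(1-3)
    by (intro exI[of _ g]) (simp add: g g_padd g_psmul)
qed

lemma quot_residue_neq:
  assumes "quot_residue v L L'"
  shows "L' \<noteq> L"
proof -
  obtain f where surj: "\<forall>b. val_ge 0 b \<longrightarrow> (\<exists>x\<in>L. val_ge 1 (f x - b))"
    and ker: "L' = {x\<in>L. val_ge 1 (f x)}"
    using assms by (elim quot_residueE) blast
  obtain x where x: "x \<in> L" "val_ge 1 (f x - 1)" using surj[rule_format, of 1] by auto
  have "\<not> val_ge 1 (f x)" using val_ge_diff[of 1 "f x" "f x - 1"] x(2) by auto
  then show ?thesis using x(1) ker by blast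
qed

lemma quot_residue_uniformizer_subset:
  assumes "quot_residue v L L'" and "v p = 1"
    and closed: "\<And>a x. val_ge 0 a \<Longrightarrow> x \<in> L \<Longrightarrow> psmul a x \<in> L"
  shows "psmul p ` L \<subseteq> L'"
proof
  obtain f where f: "\<forall>x\<in>L. val_ge 0 (f x)"
    "\<forall>a. val_ge 0 a \<longrightarrow> (\<forall>x\<in>L. val_ge 1 (f (psmul a x) - a * f x))" "L' = {x\<in>L. val_ge 1 (f x)}"
    using assms(1) by (elim quot_residueE) blast
  fix y assume "y \<in> psmul p ` L"
  then obtain x where x: "x \<in> L" "y = psmul p x" by blast
  have p: "val_ge 0 p" using assms(2) by (simp add: val_ge_def)
  have "val_ge 1 (p * f x)" using val_ge_mult[OF val_ge_self[of p]] f(1) x(1) assms(2) by force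
  moreover have "val_ge 1 (f y - p * f x)" using f(2) p x by blast
  ultimately have "val_ge 1 (f y)" using val_ge_add[of 1 "f y - p * f x" "p * f x"] by simp
  then show "y \<in> L'" using f(3) closed[OF p x(1)] x(2) by blast
qed

lemma ball_lattice_psmul_closed:
  assumes "val_ge 0 a" "q \<in> ball_lattice n z"
  shows "psmul a q \<in> ball_lattice n z"
proof -
  obtain x y where q: "q = (x, y)" by (cases q)
  have "a * x - a * y * z = a * (x - y * z)" by (simp add: algebra_simps)
  then show ?thesis
    using assms val_ge_mult[OF assms(1), of 0 y] val_ge_mult[OF assms(1), of n "x - y * z"]
    by (simp add: q psmul_def)
qed

lemma mem_psmul_ball_lattice:
  assumes "c \<noteq> 0"
  shows "(x, y) \<in> psmul c ` ball_lattice n z \<longleftrightarrow> val_ge (v c) y \<and> val_ge (n + v c) (x - y * z)"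
proof -
  have "psmul (inverse c) (x, y) = (x / c, y / c)" by (simp add: psmul_def divide_inverse_commute)
  moreover have "x / c - y / c * z = (x - y * z) / c" by (simp add: diff_divide_distrib)
  ultimately show ?thesis using assms by (simp add: mem_psmul_image_iff val_ge_divide_iff)
qed

lemma quot_residue_ball_lattice_succ: "quot_residue v (ball_lattice n z) (ball_lattice (n + 1) z)"
proof -
  obtain w where w: "w \<noteq> 0" "v w = n" using v_surj .
  define f where "f q = (fst q - snd q * z) / w" for q
  have f: "val_ge m (f (x, y)) \<longleftrightarrow> val_ge (n + m) (x - y * z)" for m x y
    using w by (simp add: f_def val_ge_divide_iff add.commute)
  have "\<exists>q\<in>ball_lattice n z. val_ge 1 (f q - c)" if "val_ge 0 c" for c
  proof -
    have "(c * w, 0) \<in> ball_lattice n z" using val_ge_mult[OF that val_ge_self[of w]] w by simp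
    moreover have "f (c * w, 0) = c" using w by (simp add: f_def)
    ultimately show ?thesis by (metis diff_self val_ge_0)
  qed
  moreover have "f (padd p q) - f p - f q = 0" "f (psmul a p) - a * f p = 0" for a p q
    by (simp_all add: f_def padd_def psmul_def diff_divide_distrib add_divide_distrib algebra_simps)
  moreover have "ball_lattice (n + 1) z = {q \<in> ball_lattice n z. val_ge 1 (f q)}"
    using f[of 1] by (auto dest: val_ge_succD)
  moreover have "\<forall>q\<in>ball_lattice n z. val_ge 0 (f q)" using f[of 0] by auto
  ultimately show ?thesis unfolding quot_residue_iff by (intro exI[of _ f]) simp
qed

lemma bt_adj_ball_vertex_succ:
  assumes "val_ge n (z' - z)"
  shows "bt_adj v (ball_vertex n z) (ball_vertex (n + 1) z')"
proof -
  have "ball_lattice (n + 1) z' \<subseteq> ball_lattice n z'" by (auto dest: val_ge_succD)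
  then have "bt_adj v (ball_vertex n z') (ball_vertex (n + 1) z')" unfolding bt_adj_def
    using quot_residue_ball_lattice_succ[of n z'] ball_lattice_in_ball_vertex[of n z']
      ball_lattice_in_ball_vertex[of "n + 1" z'] by simp blast
  moreover have "ball_vertex n z = ball_vertex n z'"
    using assms by (simp add: ball_vertex_eq_iff val_ge_commute)
  ultimately show ?thesis by simp
qed

text \<open>The residue map would vanish on \<open>f e2 \<cdot> e1 - f e1 \<cdot> e2 \<notin> p L\<close>: \<open>L / p L\<close> is
  two-dimensional over the residue field.\<close>
lemma not_quot_residue_uniformizer:
  assumes "p \<noteq> 0" "v p = 1"
  shows "\<not> quot_residue v (ball_lattice n z) (psmul p ` ball_lattice n z)"
proof
  let ?L = "ball_lattice n z"
  assume "quot_residue v ?L (psmul p ` ?L)"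
  then obtain f where f1: "\<forall>x\<in>?L. val_ge 0 (f x)"
    and f2: "\<forall>x\<in>?L. \<forall>y\<in>?L. val_ge 1 (f (padd x y) - f x - f y)"
    and f3: "\<forall>a. val_ge 0 a \<longrightarrow> (\<forall>x\<in>?L. val_ge 1 (f (psmul a x) - a * f x))"
    and "\<forall>c. val_ge 0 c \<longrightarrow> (\<exists>x\<in>?L. val_ge 1 (f x - c))"
    and f5: "psmul p ` ?L = {x\<in>?L. val_ge 1 (f x)}"
    by (rule quot_residueE)
  obtain w where w: "w \<noteq> 0" "v w = n" using v_surj .
  define e1 where "e1 = (w, 0 :: 'k)"
  define e2 where "e2 = (z, 1 :: 'k)"
  have e: "e1 \<in> ?L" "e2 \<in> ?L" using w val_ge_self[of w] by (simp_all add: e1_def e2_def)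
  have "e1 \<notin> psmul p ` ?L" using assms w by (simp add: e1_def mem_psmul_ball_lattice val_ge_def)
  then have fe1: "\<not> val_ge 1 (f e1)" using f5 e by blast
  have a: "val_ge 0 (f e2)" "val_ge 0 (- f e1)" using f1 e by auto
  define A1 where "A1 = psmul (f e2) e1"
  define A2 where "A2 = psmul (- f e1) e2"
  define A where "A = padd A1 A2"
  have A: "A = (f e2 * w - f e1 * z, - f e1)"
    by (simp add: A_def A1_def A2_def e1_def e2_def padd_def psmul_def)
  have "A1 \<in> ?L" "A2 \<in> ?L" unfolding A1_def A2_def using ball_lattice_psmul_closed a e by auto
  then have "val_ge 1 (f A - f A1 - f A2)" using f2 unfolding A_def by blast
  moreover have "val_ge 1 (f A1 - f e2 * f e1)" using f3 a(1) e(1) unfolding A1_def by blast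
  moreover have "val_ge 1 (f A2 - (- f e1) * f e2)" using f3 a(2) e(2) unfolding A2_def by blast
  ultimately have "val_ge 1 ((f A - f A1 - f A2) + (f A1 - f e2 * f e1) + (f A2 - (- f e1) * f e2))"
    by (intro val_ge_add)
  then have "val_ge 1 (f A)" by (simp add: algebra_simps)
  moreover have "A \<in> ?L" using a val_ge_mult[OF a(1) val_ge_self[of w]] w by (simp add: A)
  ultimately have "A \<in> psmul p ` ?L" using f5 by blast
  then show False using fe1 assms by (simp add: A mem_psmul_ball_lattice)
qed

lemma quot_residue_ball_lattice_bounds:
  assumes "d \<noteq> 0" and sub: "psmul d ` ball_lattice n' z' \<subseteq> ball_lattice n z"
    and qr: "quot_residue v (ball_lattice n z) (psmul d ` ball_lattice n' z')"
    and p: "p \<noteq> 0" "v p = 1"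
  shows "0 \<le> v d" "v d \<le> 1" "n \<le> v d + n'" "n' \<le> 1 - v d + n"
    "val_ge n (d * (z' - z))" "val_ge n' (p / d * (z - z'))"
proof -
  have "psmul p ` ball_lattice n z \<subseteq> psmul d ` ball_lattice n' z'"
    using quot_residue_uniformizer_subset[OF qr p(2)] ball_lattice_psmul_closed by blast
  then have "psmul (inverse d) ` psmul p ` ball_lattice n z
      \<subseteq> psmul (inverse d) ` psmul d ` ball_lattice n' z'"
    by (rule image_mono)
  then have sub': "psmul (p / d) ` ball_lattice n z \<subseteq> ball_lattice n' z'"
    using assms(1) by (simp add: divide_inverse_commute)
  have pd: "p / d \<noteq> 0" "v (p / d) = 1 - v d" using p assms(1) by (simp_all add: v_divide)
  from psmul_ball_lattice_subset[OF assms(1) sub] psmul_ball_lattice_subset[OF pd(1) sub'] pd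
  show "n \<le> v d + n'" "val_ge n (d * (z' - z))" "n' \<le> 1 - v d + n" "val_ge n' (p / d * (z - z'))"
    "0 \<le> v d" "v d \<le> 1"
    using assms(1) by (auto simp: val_ge_def)
qed

lemma quot_residue_ball_lattice_cases:
  assumes "d \<noteq> 0" and sub: "psmul d ` ball_lattice n' z' \<subseteq> ball_lattice n z"
    and qr: "quot_residue v (ball_lattice n z) (psmul d ` ball_lattice n' z')"
  shows "(n' = n + 1 \<and> val_ge n (z' - z)) \<or> (n = n' + 1 \<and> val_ge n' (z - z'))"
proof -
  obtain p where p: "p \<noteq> 0" "v p = 1" using v_surj .
  note bounds = quot_residue_ball_lattice_bounds[OF assms p]
  consider "v d = 0" | "v d = 1" using bounds(1,2) by linarith
  then show ?thesis
  proof cases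
    case 1
    then have z: "val_ge n (z' - z)" using bounds(5) assms(1) by (simp add: val_ge_unit_mult_iff)
    have "n' \<noteq> n"
    proof
      assume "n' = n"
      then have "psmul d ` ball_lattice n' z' = ball_lattice n z"
        using z ball_lattice_cong[of n z' z] psmul_unit_ball_lattice[OF assms(1) 1]
        by (simp add: val_ge_commute)
      then show False using quot_residue_neq[OF qr] by simp
    qed
    then show ?thesis using z bounds(3,4) 1 by auto
  next
    case 2
    then have "p / d \<noteq> 0" "v (p / d) = 0" using p assms(1) by (simp_all add: v_divide)
    then have z: "val_ge n' (z - z')" using val_ge_unit_mult_iff bounds(6) by blast
    have u: "d / p \<noteq> 0" "v (d / p) = 0" using p assms(1) 2 by (simp_all add: v_divide)
    have "n' \<noteq> n"
    proof
      assume "n' = n"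
      then have "psmul d ` ball_lattice n' z' = psmul p ` psmul (d / p) ` ball_lattice n z"
        using z ball_lattice_cong[of n z z'] p(1) by simp
      also have "\<dots> = psmul p ` ball_lattice n z" by (simp only: psmul_unit_ball_lattice[OF u])
      finally show False using not_quot_residue_uniformizer[OF p] qr by simp
    qed
    then show ?thesis using z bounds(3,4) 2 by auto
  qed
qed

lemma quot_residue_ball_vertex_cases:
  assumes "L \<in> ball_vertex n z" "L' \<in> ball_vertex n' z'" "L' \<subseteq> L" "quot_residue v L L'"
  shows "(n' = n + 1 \<and> val_ge n (z' - z)) \<or> (n = n' + 1 \<and> val_ge n' (z - z'))"
proof -
  obtain c c' where c: "c \<noteq> 0" "L = psmul c ` ball_lattice n z"
    and c': "c' \<noteq> 0" "L' = psmul c' ` ball_lattice n' z'"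
    using assms(1,2) unfolding mem_ball_vertex by blast
  have "psmul (inverse c) ` L' \<subseteq> psmul (inverse c) ` L" using assms(3) by (rule image_mono)
  then have sub: "psmul (inverse c * c') ` ball_lattice n' z' \<subseteq> ball_lattice n z" using c c' by simp
  have "quot_residue v (psmul (inverse c) ` L) (psmul (inverse c) ` L')"
    using quot_residue_psmul assms(4) c(1) by simp
  then have "quot_residue v (ball_lattice n z) (psmul (inverse c * c') ` ball_lattice n' z')"
    using c c' by simp
  then show ?thesis using quot_residue_ball_lattice_cases[OF _ sub] c c' by simp
qed

lemma bt_adj_ball_vertex_iff:
  "bt_adj v (ball_vertex n z) (ball_vertex n' z') \<longleftrightarrow>
    (n' = n + 1 \<and> val_ge n (z' - z)) \<or> (n = n' + 1 \<and> val_ge n' (z - z'))"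
proof
  assume "bt_adj v (ball_vertex n z) (ball_vertex n' z')"
  then consider L L' where "L \<in> ball_vertex n z" "L' \<in> ball_vertex n' z'"
      "L' \<subseteq> L" "quot_residue v L L'"
    | L L' where "L \<in> ball_vertex n' z'" "L' \<in> ball_vertex n z"
      "L' \<subseteq> L" "quot_residue v L L'"
    unfolding bt_adj_def by blast
  then show "(n' = n + 1 \<and> val_ge n (z' - z)) \<or> (n = n' + 1 \<and> val_ge n' (z - z'))"
    by cases (use quot_residue_ball_vertex_cases in blast)+
next
  assume "(n' = n + 1 \<and> val_ge n (z' - z)) \<or> (n = n' + 1 \<and> val_ge n' (z - z'))"
  then show "bt_adj v (ball_vertex n z) (ball_vertex n' z')"
    using bt_adj_ball_vertex_succ[of n z' z] bt_adj_ball_vertex_succ[of n' z z'] bt_adj_sym by auto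
qed

text \<open>Up to an additive constant, \<open>level\<close> is the Busemann function of the end \<open>\<infinity>\<close>.\<close>
definition level :: "('k \<times> 'k) set set \<Rightarrow> int" where
  "level X = (SOME n. \<exists>z. X = ball_vertex n z)"

lemma level_ball_vertex [simp]: "level (ball_vertex n z) = n"
proof -
  have "\<exists>z'. ball_vertex n z = ball_vertex (level (ball_vertex n z)) z'"
    unfolding level_def by (rule someI_ex) blast
  then show ?thesis by (auto simp: ball_vertex_eq_iff)
qed

lemma bt_adj_in_bt_vertices: "bt_adj v X Y \<Longrightarrow> X \<in> bt_vertices v \<and> Y \<in> bt_vertices v"
  unfolding bt_adj_def by blast

lemma bt_adj_level: "bt_adj v X Y \<Longrightarrow> level Y = level X + 1 \<or> level X = level Y + 1"
  by (metis bt_adj_in_bt_vertices bt_vertices_cases bt_adj_ball_vertex_iff level_ball_vertex)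

lemma bt_adj_lower_neighbour:
  assumes "bt_adj v (ball_vertex n z) Y" "level Y = n - 1"
  shows "Y = ball_vertex (n - 1) z"
proof -
  obtain m w where Y: "Y = ball_vertex m w"
    using assms(1) bt_adj_in_bt_vertices bt_vertices_cases by blast
  then have "m = n - 1" using assms(2) by simp
  then show ?thesis
    using assms(1) Y by (auto simp: bt_adj_ball_vertex_iff ball_vertex_eq_iff val_ge_commute)
qed

lemma rtranclp_bt_adj_descend: "(bt_adj v)\<^sup>*\<^sup>* (ball_vertex n z) (ball_vertex (n - int j) z)"
proof (induction j)
  case (Suc j)
  have "bt_adj v (ball_vertex (n - int j) z) (ball_vertex (n - int (Suc j)) z)"
    by (simp add: bt_adj_ball_vertex_iff)
  with Suc show ?case by (simp add: rtranclp.rtrancl_into_rtrancl)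
qed simp

lemma bt_connected:
  assumes "X \<in> bt_vertices v" "Y \<in> bt_vertices v"
  shows "(bt_adj v)\<^sup>*\<^sup>* X Y"
proof -
  have reach: "(bt_adj v)\<^sup>*\<^sup>* (ball_vertex n z) (ball_vertex m 0)" if "m \<le> n" "val_ge m z" for m n z
  proof -
    have "ball_vertex m z = ball_vertex m 0" using that by (simp add: ball_vertex_eq_iff)
    then show ?thesis using rtranclp_bt_adj_descend[of n z "nat (n - m)"] that by simp
  qed
  obtain n z n' z' where X: "X = ball_vertex n z" and Y: "Y = ball_vertex n' z'"
    using assms bt_vertices_cases by metis
  define m where "m = min (min n n') (min (if z = 0 then n else v z) (if z' = 0 then n else v z'))"
  have "(bt_adj v)\<^sup>*\<^sup>* X (ball_vertex m 0)" "(bt_adj v)\<^sup>*\<^sup>* Y (ball_vertex m 0)"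
    unfolding X Y by (intro reach; auto simp: m_def val_ge_def)+
  moreover have "symp (bt_adj v)" by (auto intro: sympI bt_adj_sym)
  ultimately show ?thesis by (metis rtranclp_trans sympD symp_rtranclp)
qed

end

section \<open>Affine maps and the end at infinity\<close>

abbreviation affine_act :: "'k::field \<Rightarrow> 'k \<Rightarrow> ('k \<times> 'k) set set \<Rightarrow> ('k \<times> 'k) set set" where
  "affine_act a b \<equiv> gl_vertex_act (a, b, 0, 1)"

context valued_field
begin

lemma mat_apply_affine_ball_lattice:
  assumes "a \<noteq> 0"
  shows "mat_apply (a, b, 0, 1) ` ball_lattice n z = ball_lattice (n + v a) (a * z + b)"
proof (intro Set.set_eqI iffI)
  fix q assume "q \<in> mat_apply (a, b, 0, 1) ` ball_lattice n z"
  then obtain x y where "val_ge 0 y" "val_ge n (x - y * z)" "q = (a * x + b * y, y)"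
    by (auto simp: mat_apply_def)
  moreover have "a * x + b * y - y * (a * z + b) = a * (x - y * z)" by (simp add: algebra_simps)
  ultimately show "q \<in> ball_lattice (n + v a) (a * z + b)"
    using assms by (simp add: val_ge_mult_iff)
next
  fix q assume "q \<in> ball_lattice (n + v a) (a * z + b)"
  moreover obtain x y where q: "q = (x, y)" by (cases q)
  ultimately have "val_ge 0 y" "val_ge (n + v a) (x - y * (a * z + b))" by simp_all
  moreover have "(x - b * y) / a - y * z = (x - y * (a * z + b)) / a"
    using assms by (simp add: field_simps)
  ultimately have "((x - b * y) / a, y) \<in> ball_lattice n z"
    using assms by (simp add: val_ge_divide_iff)
  moreover have "q = mat_apply (a, b, 0, 1) ((x - b * y) / a, y)"
    using assms by (simp add: q mat_apply_def)
  ultimately show "q \<in> mat_apply (a, b, 0, 1) ` ball_lattice n z" by blast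
qed

lemma affine_act_ball_vertex:
  assumes "a \<noteq> 0"
  shows "affine_act a b (ball_vertex n z) = ball_vertex (n + v a) (a * z + b)"
proof -
  have "mat_apply (a, b, 0, 1) (psmul c x) = psmul c (mat_apply (a, b, 0, 1) x)" for c x
    by (simp add: mat_apply_def psmul_def algebra_simps)
  then show ?thesis unfolding gl_vertex_act_def ball_vertex_def
    by (simp add: image_homothety_class mat_apply_affine_ball_lattice[OF assms])
qed

lemma affine_act_in_bt_vertices: "a \<noteq> 0 \<Longrightarrow> X \<in> bt_vertices v \<Longrightarrow> affine_act a b X \<in> bt_vertices v"
  by (metis affine_act_ball_vertex ball_vertex_in_bt_vertices bt_vertices_cases)

lemma affine_act_inverse:
  assumes "a \<noteq> 0" "X \<in> bt_vertices v"
  shows "affine_act (inverse a) (- (b / a)) (affine_act a b X) = X"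
proof -
  obtain n z where "X = ball_vertex n z" using assms(2) bt_vertices_cases by blast
  moreover have "inverse a * (a * z + b) + - (b / a) = z" using assms(1) by (simp add: field_simps)
  ultimately show ?thesis using assms(1) by (simp add: affine_act_ball_vertex v_inverse)
qed

lemma bt_adj_affine_act:
  assumes "a \<noteq> 0" "bt_adj v X Y"
  shows "bt_adj v (affine_act a b X) (affine_act a b Y)"
proof -
  obtain n z n' z' where X: "X = ball_vertex n z" and Y: "Y = ball_vertex n' z'"
    using assms(2) bt_adj_in_bt_vertices bt_vertices_cases by metis
  have "a * z' + b - (a * z + b) = a * (z' - z)" "a * z + b - (a * z' + b) = a * (z - z')"
    by (simp_all add: algebra_simps)
  then show ?thesis using assms X Y
    by (auto simp: affine_act_ball_vertex bt_adj_ball_vertex_iff val_ge_mult_iff)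
qed

lemma gdist_affine_act:
  assumes "a \<noteq> 0" "X \<in> bt_vertices v" "Y \<in> bt_vertices v"
  shows "gdist (bt_adj v) (affine_act a b X) (affine_act a b Y) = gdist (bt_adj v) X Y"
proof (rule antisym)
  show "gdist (bt_adj v) (affine_act a b X) (affine_act a b Y) \<le> gdist (bt_adj v) X Y"
    using assms by (intro gdist_hom_le bt_adj_affine_act bt_connected)
  let ?X = "affine_act a b X" and ?Y = "affine_act a b Y"
  have "gdist (bt_adj v) (affine_act (inverse a) (- (b / a)) ?X)
      (affine_act (inverse a) (- (b / a)) ?Y) \<le> gdist (bt_adj v) ?X ?Y"
    using assms
      by (intro gdist_hom_le bt_adj_affine_act bt_connected affine_act_in_bt_vertices) simp_all
  then show "gdist (bt_adj v) X Y \<le> gdist (bt_adj v) ?X ?Y"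
    using assms by (simp add: affine_act_inverse)
qed

lemma is_ray_affine_act:
  "a \<noteq> 0 \<Longrightarrow> is_ray (bt_vertices v) (bt_adj v) s \<Longrightarrow>
    is_ray (bt_vertices v) (bt_adj v) (affine_act a b \<circ> s)"
  unfolding is_ray_def by (simp add: gdist_affine_act affine_act_in_bt_vertices)

text \<open>Balls around \<open>0\<close> of growing radius: a ray representing the end \<open>\<infinity>\<close>.\<close>
definition infinity_ray :: "nat \<Rightarrow> ('k \<times> 'k) set set" where
  "infinity_ray j = ball_vertex (- int j) 0"

lemma is_ray_infinity_ray: "is_ray (bt_vertices v) (bt_adj v) infinity_ray"
  unfolding is_ray_def
proof (intro conjI allI)
  have adj: "bt_adj v (infinity_ray j) (infinity_ray (Suc j))" for j
    by (simp add: infinity_ray_def bt_adj_ball_vertex_iff)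
  have dist: "gdist (bt_adj v) (infinity_ray m) (infinity_ray (m + k)) = k" for m k
  proof (rule antisym)
    show "gdist (bt_adj v) (infinity_ray m) (infinity_ray (m + k)) \<le> k"
      using adj by (rule gdist_path_le)
    have "\<bar>level a - level b\<bar> \<le> 1" if "bt_adj v a b" for a b using bt_adj_level[OF that] by auto
    from height_diff_le_gdist[of "bt_adj v" level, OF this
        path_rtranclp[of "bt_adj v" infinity_ray, OF adj]]
    show "k \<le> gdist (bt_adj v) (infinity_ray m) (infinity_ray (m + k))"
      by (simp add: infinity_ray_def)
  qed
  have "symp (bt_adj v)" by (auto intro: sympI bt_adj_sym)
  fix m n
  show "int (gdist (bt_adj v) (infinity_ray m) (infinity_ray n)) = \<bar>int m - int n\<bar>"
  proof (cases "m \<le> n")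
    case True
    then obtain k where "n = m + k" using le_Suc_ex by blast
    then show ?thesis using dist[of m k] by simp
  next
    case False
    then obtain k where "m = n + k" using le_Suc_ex[of n m] by auto
    then show ?thesis using dist[of n k] gdist_commute[OF \<open>symp (bt_adj v)\<close>] by simp
  qed
qed (simp add: infinity_ray_def)

lemma affine_act_infinity_ray:
  assumes "a \<noteq> 0"
  obtains A B where "\<And>i. infinity_ray (i + A) = affine_act a b (infinity_ray (i + B))"
    and "int A = int B - v a"
proof
  define B where "B = nat (max (v a) (v a - v b))"
  have B: "v a \<le> int B" "v a - v b \<le> int B" by (auto simp: B_def)
  then show "int (nat (int B - v a)) = int B - v a" by simp
  fix i
  have "val_ge (v a - int B - int i) b" using B by (auto simp: val_ge_def)
  then show "infinity_ray (i + nat (int B - v a)) = affine_act a b (infinity_ray (i + B))"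
    using assms B by (simp add: infinity_ray_def affine_act_ball_vertex ball_vertex_eq_iff)
qed

lemma ray_equiv_affine_act_infinity_ray:
  "a \<noteq> 0 \<Longrightarrow> ray_equiv infinity_ray (affine_act a b \<circ> infinity_ray)"
  unfolding ray_equiv_def comp_def by (metis affine_act_infinity_ray)

lemma boundary_act_affine_infinity:
  assumes "a \<noteq> 0"
  shows "boundary_act (affine_act a b) (ray_class (bt_vertices v) (bt_adj v) infinity_ray)
    = ray_class (bt_vertices v) (bt_adj v) infinity_ray"
  using assms is_ray_affine_act[OF assms] is_ray_affine_act[of "inverse a"]
    affine_act_inverse[of "inverse a" _ "- (b / a)"]
    ray_equiv_affine_act_infinity_ray[OF assms] ray_equiv_affine_act_infinity_ray[of "inverse a"]
  by (intro boundary_act_ray_class) (simp_all add: field_simps)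

end

section \<open>Ends fixed by a family of affine maps\<close>

context valued_field
begin

lemma bt_ray_level_cases:
  assumes s: "is_ray (bt_vertices v) (bt_adj v) s"
  shows "(\<forall>n. level (s n) = level (s 0) - int n) \<or>
    (\<exists>N. \<forall>m. level (s (N + m)) = level (s N) + int m)"
proof (rule up_down_sequence_cases[where t = "\<lambda>n. level (s n)"])
  have adj: "bt_adj v (s n) (s (Suc n))" for n using is_ray_adj[OF s bt_connected] .
  show "level (s (Suc n)) = level (s n) + 1 \<or> level (s n) = level (s (Suc n)) + 1" for n
    using bt_adj_level[OF adj] .
  show "level (s (Suc (Suc n))) = level (s (Suc n)) + 1"
    if "level (s (Suc n)) = level (s n) + 1" for n
  proof (rule ccontr)
    assume turn: "\<not> ?thesis"
    obtain k z where k: "s (Suc n) = ball_vertex k z"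
      using s bt_vertices_cases unfolding is_ray_def by blast
    have "level (s (Suc (Suc n))) = k - 1"
      using turn bt_adj_level[OF adj[of "Suc n"]] k by auto
    then have "s (Suc (Suc n)) = ball_vertex (k - 1) z"
      using adj[of "Suc n"] k by (intro bt_adj_lower_neighbour) simp_all
    moreover have "s n = ball_vertex (k - 1) z"
      using that bt_adj_sym[OF adj[of n]] k by (intro bt_adj_lower_neighbour) simp_all
    ultimately have "s (Suc (Suc n)) = s n" by simp
    then show False using is_ray_no_backtrack[OF s] by blast
  qed
qed

lemma descending_ray_equiv_infinity_ray:
  assumes s: "is_ray (bt_vertices v) (bt_adj v) s" and down: "\<And>n. level (s n) = level (s 0) - int n"
  shows "ray_equiv infinity_ray s"
proof -
  obtain n0 z0 where s0: "s 0 = ball_vertex n0 z0"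
    using s bt_vertices_cases unfolding is_ray_def by blast
  have sn: "s n = ball_vertex (n0 - int n) z0" for n
  proof (induction n)
    case (Suc n)
    have "bt_adj v (ball_vertex (n0 - int n) z0) (s (Suc n))"
      using is_ray_adj[OF s bt_connected, of n] Suc by simp
    moreover have "level (s (Suc n)) = n0 - int n - 1" using down[of "Suc n"] s0 by simp
    ultimately have "s (Suc n) = ball_vertex (n0 - int n - 1) z0" by (rule bt_adj_lower_neighbour)
    moreover have "n0 - int n - 1 = n0 - int (Suc n)" by simp
    ultimately show ?case by simp
  qed (simp add: s0)
  define M where "M = nat (max n0 (n0 - v z0))"
  have M: "n0 \<le> int M" "n0 - v z0 \<le> int M" by (auto simp: M_def)
  have "infinity_ray (i + nat (int M - n0)) = s (i + M)" for i
    using M by (auto simp: sn infinity_ray_def ball_vertex_eq_iff val_ge_def)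
  then show ?thesis unfolding ray_equiv_def by blast
qed

lemma ascending_ray_centres:
  assumes s: "is_ray (bt_vertices v) (bt_adj v) s" and up: "\<And>m. level (s (N + m)) = c + int m"
  obtains Z where "\<And>m. s (N + m) = ball_vertex (c + int m) (Z m)"
    and "\<And>m j. val_ge (c + int m) (Z (m + j) - Z m)"
proof -
  have "\<exists>z. s (N + m) = ball_vertex (c + int m) z" for m
  proof -
    obtain n z where "s (N + m) = ball_vertex n z"
      using s bt_vertices_cases unfolding is_ray_def by blast
    moreover from this have "n = c + int m" using up[of m] by simp
    ultimately show ?thesis by blast
  qed
  then obtain Z where Z: "\<And>m. s (N + m) = ball_vertex (c + int m) (Z m)" by metis
  have step: "val_ge (c + int m) (Z (Suc m) - Z m)" for m
    using is_ray_adj[OF s bt_connected, of "N + m"] Z[of m] Z[of "Suc m"]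
    by (simp add: bt_adj_ball_vertex_iff)
  have "val_ge (c + int m) (Z (m + j) - Z m)" for m j
  proof (induction j)
    case (Suc j)
    have "val_ge (c + int m) (Z (Suc (m + j)) - Z (m + j))"
      using step[of "m + j"] by (rule val_ge_mono) simp
    from val_ge_add[OF this Suc] show ?case by simp
  qed simp
  with Z show ?thesis by (rule that)
qed

lemma affine_act_ascending_ray_shift:
  assumes "a \<noteq> 0" and Z: "\<And>m. s (N + m) = ball_vertex (c + int m) (Z m)"
    and "ray_equiv s (affine_act a b \<circ> s)"
  obtains p q where "int p = int q + v a"
    and "\<And>m. val_ge (c + int p + int m) (Z (p + m) - (a * Z (q + m) + b))"
proof -
  obtain p q where pq: "\<And>i. s (i + p) = affine_act a b (s (i + q))"
    using assms(3) unfolding ray_equiv_def by auto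
  have vertex_eq: "ball_vertex (c + int (m + p)) (Z (m + p))
      = ball_vertex (c + int (m + q) + v a) (a * Z (m + q) + b)" for m
    using pq[of "N + m"] Z[of "m + p"] Z[of "m + q"] affine_act_ball_vertex[OF assms(1)]
    by (simp add: ac_simps)
  have eq: "c + int (m + p) = c + int (m + q) + v a"
    and shift: "val_ge (c + int (m + p)) (Z (m + p) - (a * Z (m + q) + b))" for m
    using vertex_eq[of m, unfolded ball_vertex_eq_iff] by blast+
  have "int p = int q + v a" using eq[of 0] by simp
  moreover have "val_ge (c + int p + int m) (Z (p + m) - (a * Z (q + m) + b))" for m
    using shift[of m] by (simp add: ac_simps)
  ultimately show ?thesis by (rule that)
qed

text \<open>The centres converge to the fixed point of an affine map that shrinks distances; as
  \<open>K\<close> need not be complete, this fixed point replaces the limit of the centres.\<close>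
lemma ascending_centres_converge:
  assumes chain: "\<And>m j. val_ge (c + int m) (Z (m + j) - Z m)"
    and a: "a \<noteq> 0" "0 < v a" and pq: "int p = int q + v a"
    and shift: "\<And>m. val_ge (c + int p + int m) (Z (p + m) - (a * Z (q + m) + b))"
    and "q \<le> m"
  shows "val_ge (c + int m) (Z m - b / (1 - a))"
proof -
  obtain k where m: "m = q + k" using assms(6) le_Suc_ex by blast
  define \<zeta> where "\<zeta> = b / (1 - a)"
  have unit: "1 - a \<noteq> 0" "v (1 - a) = 0" using v_one_minus a by auto
  then have "(1 - a) * \<zeta> = b" by (simp add: \<zeta>_def)
  then have b: "b = \<zeta> - a * \<zeta>" by (simp add: algebra_simps)
  define u where "u j = Z j - \<zeta>" for j
  have p: "p = q + nat (v a)" using pq a by simp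
  have d1: "val_ge (c + int m) (u (p + k) - u m)"
    using chain[of m "nat (v a)"] p m by (simp add: u_def ac_simps)
  have "val_ge (c + int p + int k) (u (p + k) - a * u m)"
    using shift[of k] m by (simp add: u_def b algebra_simps)
  then have d2: "val_ge (c + int m) (u (p + k) - a * u m)"
    by (rule val_ge_mono) (use pq a m in simp)
  have "val_ge (c + int m) ((1 - a) * u m)"
    using val_ge_diff[OF d2 d1] by (simp add: algebra_simps)
  then show ?thesis using unit by (simp add: val_ge_unit_mult_iff u_def \<zeta>_def)
qed

lemma ascending_centres_limit_fixed:
  assumes conv: "\<And>m. q0 \<le> m \<Longrightarrow> val_ge (c + int m) (Z m - \<zeta>)"
    and "a \<noteq> 0" and pq: "int p = int q + v a"
    and shift: "\<And>m. val_ge (c + int p + int m) (Z (p + m) - (a * Z (q + m) + b))"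
  shows "a * \<zeta> + b = \<zeta>"
proof -
  define E where "E = \<zeta> - (a * \<zeta> + b)"
  have E: "val_ge (c + int p + int m) E" if "q0 \<le> m" for m
  proof -
    have d1: "val_ge (c + int p + int m) (Z (p + m) - \<zeta>)"
      using conv[of "p + m"] that by (simp add: ac_simps)
    have "val_ge (c + int (q + m)) (Z (q + m) - \<zeta>)" using conv[of "q + m"] that by simp
    moreover have "c + int p + int m = c + int (q + m) + v a" using pq by simp
    ultimately have d3: "val_ge (c + int p + int m) (a * (Z (q + m) - \<zeta>))"
      using assms(2) by (simp add: val_ge_mult_iff)
    have "E = (Z (p + m) - (a * Z (q + m) + b)) - (Z (p + m) - \<zeta>) + a * (Z (q + m) - \<zeta>)"
      by (simp add: E_def algebra_simps)
    then show ?thesis using val_ge_add[OF val_ge_diff[OF shift[of m] d1] d3] by simp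
  qed
  have "val_ge n E" for n
    using E[of "max q0 (nat (n - c - int p))"] by (rule val_ge_mono) auto
  then have "E = 0" by (rule val_ge_all_imp_zero)
  then show ?thesis by (simp add: E_def)
qed

lemma ascending_ray_fixed_imp_common_fixed_point:
  assumes a: "\<And>i. i \<in> I \<Longrightarrow> a i \<noteq> 0" and i0: "i0 \<in> I" "0 < v (a i0)"
    and s: "is_ray (bt_vertices v) (bt_adj v) s" "\<And>m. level (s (N + m)) = c + int m"
    and fixed: "\<And>i. i \<in> I \<Longrightarrow> ray_equiv s (affine_act (a i) (b i) \<circ> s)"
  shows "\<exists>\<zeta>. \<forall>i\<in>I. a i * \<zeta> + b i = \<zeta>"
proof -
  obtain Z where Z: "\<And>m. s (N + m) = ball_vertex (c + int m) (Z m)"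
    and chain: "\<And>m j. val_ge (c + int m) (Z (m + j) - Z m)"
    using ascending_ray_centres[OF s] by blast
  obtain p q where "int p = int q + v (a i0)"
    "\<And>m. val_ge (c + int p + int m) (Z (p + m) - (a i0 * Z (q + m) + b i0))"
    using affine_act_ascending_ray_shift[OF a[OF i0(1)] Z fixed[OF i0(1)]] by blast
  then have conv: "\<And>m. q \<le> m \<Longrightarrow> val_ge (c + int m) (Z m - b i0 / (1 - a i0))"
    using ascending_centres_converge[OF chain a[OF i0(1)] i0(2)] by blast
  have "a i * (b i0 / (1 - a i0)) + b i = b i0 / (1 - a i0)" if i: "i \<in> I" for i
  proof -
    obtain p' q' where "int p' = int q' + v (a i)"
      "\<And>m. val_ge (c + int p' + int m) (Z (p' + m) - (a i * Z (q' + m) + b i))"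
      using affine_act_ascending_ray_shift[OF a[OF i] Z fixed[OF i]] by blast
    then show ?thesis using ascending_centres_limit_fixed[OF conv a[OF i]] by blast
  qed
  then show ?thesis by blast
qed

lemma affine_fixed_end_unique:
  assumes a: "\<And>i. i \<in> I \<Longrightarrow> a i \<noteq> 0" "i0 \<in> I" "0 < v (a i0)"
    and no_fixed_point: "\<nexists>\<zeta>. \<forall>i\<in>I. a i * \<zeta> + b i = \<zeta>"
    and \<alpha>: "\<alpha> \<in> tree_boundary (bt_vertices v) (bt_adj v)"
    and fixed: "\<forall>i\<in>I. boundary_act (affine_act (a i) (b i)) \<alpha> = \<alpha>"
  shows "\<alpha> = ray_class (bt_vertices v) (bt_adj v) infinity_ray"
proof -
  obtain s where s: "is_ray (bt_vertices v) (bt_adj v) s"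
    "\<alpha> = ray_class (bt_vertices v) (bt_adj v) s"
    using \<alpha> unfolding tree_boundary_def by blast
  have "ray_equiv s (affine_act (a i) (b i) \<circ> s)" if "i \<in> I" for i
  proof -
    have "s \<in> \<alpha>" using s ray_equiv_refl unfolding ray_class_def by blast
    then have "affine_act (a i) (b i) \<circ> s \<in> \<alpha>" using fixed that unfolding boundary_act_def by blast
    then show ?thesis using s(2) unfolding ray_class_def by blast
  qed
  then have equiv: "ray_equiv infinity_ray s"
    using bt_ray_level_cases[OF s(1)] descending_ray_equiv_infinity_ray[OF s(1)]
      ascending_ray_fixed_imp_common_fixed_point[where I = I and a = a and b = b, OF a s(1)]
      no_fixed_point
    by blast
  show ?thesis using s(2) ray_class_eq[OF equiv] by simp
qed

lemma busemann_affine_act_infinity: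
  assumes "a \<noteq> 0" "r \<in> ray_class (bt_vertices v) (bt_adj v) infinity_ray"
  shows "busemann (bt_adj v) r (affine_act a b (infinity_ray 0))
    - busemann (bt_adj v) r (infinity_ray 0) = v a"
proof -
  have "ray_equiv infinity_ray r" using assms(2) by (simp add: ray_class_def)
  then obtain k l where kl: "\<And>i. infinity_ray (i + k) = r (i + l)"
    unfolding ray_equiv_def by blast
  obtain A B where AB: "\<And>i. infinity_ray (i + A) = affine_act a b (infinity_ray (i + B))"
    "int A = int B - v a"
    using affine_act_infinity_ray[OF assms(1)] by blast
  have dist: "gdist (bt_adj v) (infinity_ray 0) (infinity_ray n) = n" for n
  proof -
    have "int (gdist (bt_adj v) (infinity_ray 0) (infinity_ray n)) = \<bar>int 0 - int n\<bar>"
      using is_ray_infinity_ray unfolding is_ray_def by blast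
    then show ?thesis by simp
  qed
  have "busemann (bt_adj v) r (infinity_ray 0) = real k - real l"
    using busemann_eventually_shifted[of r l "\<lambda>i. infinity_ray (i + k)" 0] kl[symmetric] dist
      by simp
  moreover have "busemann (bt_adj v) r (affine_act a b (infinity_ray 0))
      = real k - real A + real B - real l"
  proof (rule busemann_eventually_shifted[of r l "\<lambda>i. infinity_ray (i + k)" A])
    fix i assume "A \<le> i"
    then obtain j where j: "i = j + A" by (metis add.commute le_Suc_ex)
    have "infinity_ray (i + k) = affine_act a b (infinity_ray (j + k + B))"
      using AB(1)[of "j + k"] j by (simp add: ac_simps)
    then have "gdist (bt_adj v) (affine_act a b (infinity_ray 0)) (infinity_ray (i + k))
        = gdist (bt_adj v) (infinity_ray 0) (infinity_ray (j + k + B))"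
      using gdist_affine_act[OF assms(1)] by (simp add: infinity_ray_def)
    then show "real (gdist (bt_adj v) (affine_act a b (infinity_ray 0)) (infinity_ray (i + k)))
        = real i + (real k - real A + real B)"
      using j dist by simp
  qed (use kl in simp)
  ultimately show ?thesis using AB(2) by simp
qed

end

section \<open>The exceptional action\<close>

lemma character_inv:
  assumes "group G" "character G \<chi>" "g \<in> carrier G"
  shows "\<chi> (inv\<^bsub>G\<^esub> g) = inverse (\<chi> g)"
proof -
  interpret group G by (rule assms(1))
  have mult: "\<chi> (x \<otimes>\<^bsub>G\<^esub> y) = \<chi> x * \<chi> y" if "x \<in> carrier G" "y \<in> carrier G" for x y
    using assms(2) that by (simp add: character_def)
  have "\<chi> \<one>\<^bsub>G\<^esub> * \<chi> \<one>\<^bsub>G\<^esub> = \<chi> \<one>\<^bsub>G\<^esub> * 1" using mult[of "\<one>\<^bsub>G\<^esub>" "\<one>\<^bsub>G\<^esub>"] by simp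
  moreover have "\<chi> \<one>\<^bsub>G\<^esub> \<noteq> 0" using assms(2) by (simp add: character_def)
  ultimately have "\<chi> \<one>\<^bsub>G\<^esub> = 1" using mult_left_cancel by blast
  moreover have "\<chi> (inv\<^bsub>G\<^esub> g) * \<chi> g = \<chi> \<one>\<^bsub>G\<^esub>" using mult[of "inv\<^bsub>G\<^esub> g" g] assms(3) by simp
  moreover have "\<chi> g \<noteq> 0" using assms(2,3) by (simp add: character_def)
  ultimately show ?thesis by (simp add: field_simps)
qed

lemma coboundary1_iff_common_fixed_point:
  "coboundary1 G \<chi> \<theta> \<longleftrightarrow> (\<exists>\<zeta>. \<forall>g\<in>carrier G. \<chi> g * \<zeta> + \<theta> g = \<zeta>)"
proof
  assume "coboundary1 G \<chi> \<theta>"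
  then obtain \<mu> where "\<forall>g\<in>carrier G. \<theta> g = \<mu> * (\<chi> g - 1)" by (auto simp: coboundary1_def)
  then have "\<forall>g\<in>carrier G. \<chi> g * - \<mu> + \<theta> g = - \<mu>" by (simp add: algebra_simps)
  then show "\<exists>\<zeta>. \<forall>g\<in>carrier G. \<chi> g * \<zeta> + \<theta> g = \<zeta>" ..
next
  assume "\<exists>\<zeta>. \<forall>g\<in>carrier G. \<chi> g * \<zeta> + \<theta> g = \<zeta>"
  then obtain \<zeta> where "\<forall>g\<in>carrier G. \<chi> g * \<zeta> + \<theta> g = \<zeta>" ..
  then have "\<forall>g\<in>carrier G. \<theta> g = - \<zeta> * (\<chi> g - 1)" by (simp add: algebra_simps eq_diff_eq')
  then show "coboundary1 G \<chi> \<theta>" unfolding coboundary1_def ..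
qed

context valued_field
begin

lemma character_val_pos:
  assumes "group G" "character G \<chi>" "\<exists>g\<in>carrier G. v (\<chi> g) \<noteq> 0"
  shows "\<exists>g\<in>carrier G. 0 < v (\<chi> g)"
proof -
  obtain g where g: "g \<in> carrier G" "v (\<chi> g) \<noteq> 0" using assms(3) by blast
  have "v (\<chi> (inv\<^bsub>G\<^esub> g)) = - v (\<chi> g)"
    using character_inv[OF assms(1,2) g(1)] assms(2) g(1) by (simp add: character_def v_inverse)
  moreover have "inv\<^bsub>G\<^esub> g \<in> carrier G" using assms(1) g(1) by simp
  ultimately show ?thesis using g by (metis neg_0_less_iff_less linorder_neqE_linordered_idom)
qed

lemma exceptional_action_affine:
  assumes a: "\<And>g. g \<in> carrier G \<Longrightarrow> a g \<noteq> 0" and pos: "\<exists>g\<in>carrier G. 0 < v (a g)"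
    and no_fixed_point: "\<nexists>\<zeta>. \<forall>g\<in>carrier G. a g * \<zeta> + b g = \<zeta>"
  shows "exceptional_action G (bt_vertices v) (bt_adj v) (\<lambda>g. affine_act (a g) (b g))"
  unfolding exceptional_action_def
proof (intro conjI allI impI)
  let ?\<omega> = "ray_class (bt_vertices v) (bt_adj v) infinity_ray"
  obtain g0 where g0: "g0 \<in> carrier G" "0 < v (a g0)" using pos by blast
  have unique: "\<alpha> = ?\<omega>" if "\<alpha> \<in> tree_boundary (bt_vertices v) (bt_adj v)"
    "\<forall>g\<in>carrier G. boundary_act (affine_act (a g) (b g)) \<alpha> = \<alpha>" for \<alpha>
    using affine_fixed_end_unique[OF a g0 no_fixed_point that] .
  show "\<exists>!\<alpha>. \<alpha> \<in> tree_boundary (bt_vertices v) (bt_adj v) \<and>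
      (\<forall>g\<in>carrier G. boundary_act (affine_act (a g) (b g)) \<alpha> = \<alpha>)"
  proof (rule ex1I, intro conjI ballI)
    show "?\<omega> \<in> tree_boundary (bt_vertices v) (bt_adj v)"
      unfolding tree_boundary_def using is_ray_infinity_ray by blast
    show "boundary_act (affine_act (a g) (b g)) ?\<omega> = ?\<omega>" if "g \<in> carrier G" for g
      using boundary_act_affine_infinity a that by blast
  qed (use unique in blast)
  fix \<alpha> r
  assume "\<alpha> \<in> tree_boundary (bt_vertices v) (bt_adj v) \<and>
    (\<forall>g\<in>carrier G. boundary_act (affine_act (a g) (b g)) \<alpha> = \<alpha>) \<and> r \<in> \<alpha>"
  then have r: "r \<in> ?\<omega>" using unique[of \<alpha>] by simp
  have "busemann_cocycle (bt_vertices v) (bt_adj v) (\<lambda>g. affine_act (a g) (b g)) r g0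
      (infinity_ray 0) = v (a g0)"
    using busemann_affine_act_infinity[OF a[OF g0(1)] r]
    by (simp add: busemann_cocycle_def infinity_ray_def)
  moreover have "infinity_ray 0 \<in> bt_vertices v" by (simp add: infinity_ray_def)
  ultimately have "busemann_cocycle (bt_vertices v) (bt_adj v) (\<lambda>g. affine_act (a g) (b g)) r g0
      \<noteq> (\<lambda>x\<in>bt_vertices v. 0)"
    using g0(2) by force
  then show "\<exists>g\<in>carrier G. busemann_cocycle (bt_vertices v) (bt_adj v)
      (\<lambda>g. affine_act (a g) (b g)) r g \<noteq> (\<lambda>x\<in>bt_vertices v. 0)"
    using g0(1) by blast
qed

end

theorem proposition6:
  fixes v :: "'k::field \<Rightarrow> int"
    and G :: "('g, 'b) monoid_scheme"
    and \<chi> \<theta> :: "'g \<Rightarrow> 'k"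
  assumes "discrete_valuation v"
    and "finitely_generated_group G"
    and "\<chi> \<in> E1 G"
    and "cocycle1 G \<chi> \<theta>"
    and "\<not> coboundary1 G \<chi> \<theta>"
    and "\<exists>g\<in>carrier G. v (\<chi> g) \<noteq> 0"
  shows "exceptional_action G (bt_vertices v) (bt_adj v)
           (\<lambda>g. gl_vertex_act (affine_rep \<chi> \<theta> g))"
proof -
  interpret valued_field v by (rule valued_field.intro) (rule assms(1))
  have G: "group G" using assms(2) by (simp add: finitely_generated_group_def)
  have \<chi>: "character G \<chi>" using assms(3) by (simp add: E1_def)
  then have "\<And>g. g \<in> carrier G \<Longrightarrow> \<chi> g \<noteq> 0" by (simp add: character_def)
  moreover have "\<exists>g\<in>carrier G. 0 < v (\<chi> g)" using character_val_pos[OF G \<chi> assms(6)] .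
  moreover have "\<nexists>\<zeta>. \<forall>g\<in>carrier G. \<chi> g * \<zeta> + \<theta> g = \<zeta>"
    using assms(5) coboundary1_iff_common_fixed_point by blast
  ultimately show ?thesis using exceptional_action_affine[of G \<chi> \<theta>] by (simp add: affine_rep_def)
qed

end
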